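(* Let $\omega\in\Omega$ and let $C_\infty$ be an infinite contour of $\phi(\omega)$. Let $G\setminus C_\infty$ be the graph obtained from $G$ by removing all edges of $G$ crossed by edges of $C_\infty$. Then each infinite connected component of $G\setminus C_\infty$ contains an infinite cluster of $\omega$ that is incident to $C_\infty$.
   Context: Let $G$ be the square grid with vertex set $\mathbb{Z}^2$ and nearest-neighbour edges (unit segments). The face of $G$ with lower-left corner $(m,n)$ is black if $m+n$ is even, white otherwise. $\Omega\subset\{0,1\}^{\mathbb{Z}^2}$ is the set of $\omega$ such that for every black face the states of its four vertices, listed clockwise from the lower-left corner, form one of $0000,1111,0011,1100,0110,1001$. A cluster of $\omega$ is a maximal $G$-connected set of vertices on which $\omega$ is constant, infinite if it has infinitely many vertices. Let $\mathbb{L}_1$ have vertices $(m-\tfrac12,n+\tfrac12)$, $m,n$ both even, and $\mathbb{L}_2$ vertices $(m-\tfrac12,n+\tfrac12)$, $m,n$ both odd; in each, two vertices are joined by an edge (a closed segment of length $2$) iff at Euclidean distance $2$. The center of each black face $F$ is the midpoint of exactly one edge $e_1$ of $\mathbb{L}_1$ and one edge $e_2$ of $\mathbb{L}_2$. Define $\phi(\omega)\in\{0,1\}^{E(\mathbb{L}_1)\cup E(\mathbb{L}_2)}$: if the configuration around $F$ is $0000$ or $1111$ both get $0$; if the two upper vertices share a state different from the two lower ones, the horizontal one of $e_1,e_2$ gets $1$, the vertical $0$; if the two left vertices share a state different from the two right ones, the vertical one gets $1$, the horizontal $0$. Edges with value $1$ are present; a contour is a connected component of the set of present edges, infinite if it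 has infinitely many edges. A cluster is incident to a contour if some vertex of the cluster is at Euclidean distance $\tfrac12$ from some edge (segment) of the contour. *)

theory Defs
  imports "HOL-Analysis.Analysis"
begin

text \<open>Configurations: \<open>\<omega> v = True\<close> encodes state 1, \<open>False\<close> encodes state 0.
  Vertices of G are integer pairs; they sit at the point gpt v in the plane.\<close>

definition gpt :: "int \<times> int \<Rightarrow> real \<times> real" where
  "gpt v = (of_int (fst v), of_int (snd v))"

definition G_edge :: "(int \<times> int) set \<Rightarrow> bool" where
  "G_edge e \<longleftrightarrow> (\<exists>u v. e = {u, v} \<and> dist (gpt u) (gpt v) = 1)"

definition gseg :: "(int \<times> int) set \<Rightarrow> (real \<times> real) set" where
  "gseg e = convex hull (gpt ` e)"

text \<open>Black faces: lower-left corner (m,n) with m+n even.\<close>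
definition black :: "int \<Rightarrow> int \<Rightarrow> bool" where
  "black m n \<longleftrightarrow> even (m + n)"

definition Omega :: "(int \<times> int \<Rightarrow> bool) set" where
  "Omega = {\<omega>. \<forall>m n. black m n \<longrightarrow>
      (\<omega> (m, n), \<omega> (m, n + 1), \<omega> (m + 1, n + 1), \<omega> (m + 1, n)) \<in>
        {(False, False, False, False), (True, True, True, True),
         (False, False, True, True), (True, True, False, False),
         (False, True, True, False), (True, False, False, True)}}"

definition dpt :: "int \<times> int \<Rightarrow> real \<times> real" where
  "dpt p = (of_int (fst p) - 1/2, of_int (snd p) + 1/2)"

definition L1_vert :: "int \<times> int \<Rightarrow> bool" where
  "L1_vert p \<longleftrightarrow> even (fst p) \<and> even (snd p)"

definition L2_vert :: "int \<times> int \<Rightarrow> bool" where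
  "L2_vert p \<longleftrightarrow> odd (fst p) \<and> odd (snd p)"

definition L1_edge :: "(int \<times> int) set \<Rightarrow> bool" where
  "L1_edge e \<longleftrightarrow> (\<exists>p q. e = {p, q} \<and> L1_vert p \<and> L1_vert q \<and> dist (dpt p) (dpt q) = 2)"

definition L2_edge :: "(int \<times> int) set \<Rightarrow> bool" where
  "L2_edge e \<longleftrightarrow> (\<exists>p q. e = {p, q} \<and> L2_vert p \<and> L2_vert q \<and> dist (dpt p) (dpt q) = 2)"

definition dual_edge :: "(int \<times> int) set \<Rightarrow> bool" where
  "dual_edge e \<longleftrightarrow> L1_edge e \<or> L2_edge e"

definition dseg :: "(int \<times> int) set \<Rightarrow> (real \<times> real) set" where
  "dseg e = convex hull (dpt ` e)"

definition phi :: "(int \<times> int \<Rightarrow> bool) \<Rightarrow> (int \<times> int) set \<Rightarrow> bool" where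
  "phi \<omega> e \<longleftrightarrow> dual_edge e \<and>
     (\<exists>p q m n. e = {p, q} \<and> black m n \<and>
        midpoint (dpt p) (dpt q) = (of_int m + 1/2, of_int n + 1/2) \<and>
        ((snd p = snd q \<and> \<omega> (m, n + 1) = \<omega> (m + 1, n + 1) \<and> \<omega> (m, n) = \<omega> (m + 1, n)
            \<and> \<omega> (m, n + 1) \<noteq> \<omega> (m, n)) \<or>
         (fst p = fst q \<and> \<omega> (m, n) = \<omega> (m, n + 1) \<and> \<omega> (m + 1, n) = \<omega> (m + 1, n + 1)
            \<and> \<omega> (m, n) \<noteq> \<omega> (m + 1, n))))"

definition dual_adj :: "(int \<times> int \<Rightarrow> bool) \<Rightarrow> (int \<times> int) set \<Rightarrow> (int \<times> int) set \<Rightarrow> bool" where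
  "dual_adj \<omega> e f \<longleftrightarrow> phi \<omega> e \<and> phi \<omega> f \<and> e \<inter> f \<noteq> {}"

definition is_contour :: "(int \<times> int \<Rightarrow> bool) \<Rightarrow> (int \<times> int) set set \<Rightarrow> bool" where
  "is_contour \<omega> C \<longleftrightarrow> (\<exists>e. phi \<omega> e \<and> C = {f. (dual_adj \<omega>)\<^sup>*\<^sup>* e f})"

definition same_adj :: "(int \<times> int \<Rightarrow> bool) \<Rightarrow> int \<times> int \<Rightarrow> int \<times> int \<Rightarrow> bool" where
  "same_adj \<omega> u v \<longleftrightarrow> G_edge {u, v} \<and> \<omega> u = \<omega> v"

definition is_cluster :: "(int \<times> int \<Rightarrow> bool) \<Rightarrow> (int \<times> int) set \<Rightarrow> bool" where
  "is_cluster \<omega> K \<longleftrightarrow> (\<exists>v. K = {w. (same_adj \<omega>)\<^sup>*\<^sup>* v w})"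

definition GC_adj :: "(int \<times> int) set set \<Rightarrow> int \<times> int \<Rightarrow> int \<times> int \<Rightarrow> bool" where
  "GC_adj C u v \<longleftrightarrow> G_edge {u, v} \<and> (\<forall>f\<in>C. gseg {u, v} \<inter> dseg f = {})"

definition is_GC_component :: "(int \<times> int) set set \<Rightarrow> (int \<times> int) set \<Rightarrow> bool" where
  "is_GC_component C K \<longleftrightarrow> (\<exists>v. K = {w. (GC_adj C)\<^sup>*\<^sup>* v w})"

definition incident :: "(int \<times> int) set \<Rightarrow> (int \<times> int) set set \<Rightarrow> bool" where
  "incident K C \<longleftrightarrow> (\<exists>v\<in>K. \<exists>f\<in>C. infdist (gpt v) (dseg f) = 1/2)"

end

theory Submission
  imports Defs
begin

text \<open>Let \<open>X\<close> be the set of grid edges crossed by the infinite contour and take a dart \<open>(x, y)\<close>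
  leaving the infinite component \<open>K\<close> of the grid minus \<open>X\<close>; the edge \<open>{x, y}\<close> is in \<open>X\<close>, so
  \<open>x\<close> is at distance \<open>1/2\<close> from the contour. Every edge of \<open>X\<close> separates different states,
  the sides of a face met by \<open>X\<close> that separate different states all lie in \<open>X\<close>, and \<open>X\<close> is
  connected through faces because the contour is connected. Walking along the boundary of \<open>K\<close>
  face by face never leaves the cluster of \<open>x\<close>. If that cluster were finite, the walk would
  close up into a finite set \<open>E \<subseteq> X\<close> with an even number of sides on every face; the parity
  of crossings of \<open>E\<close> defines a bounded enclosed region avoiding \<open>K\<close>, and face connectivity
  forces every edge of \<open>X\<close> into \<open>E\<close> or into this region, so \<open>X\<close> and hence the contour would
  be finite.\<close>

section \<open>The square grid\<close>

type_synonym vertex = "int \<times> int"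

definition grid_adj :: "vertex \<Rightarrow> vertex \<Rightarrow> bool" where
  "grid_adj u v \<longleftrightarrow>
     (fst u = fst v \<and> \<bar>snd u - snd v\<bar> = 1) \<or> (snd u = snd v \<and> \<bar>fst u - fst v\<bar> = 1)"

definition hedge :: "int \<Rightarrow> int \<Rightarrow> vertex set" where
  "hedge a b = {(a, b), (a + 1, b)}"

definition vedge :: "int \<Rightarrow> int \<Rightarrow> vertex set" where
  "vedge a b = {(a, b), (a, b + 1)}"

definition face_sides :: "int \<Rightarrow> int \<Rightarrow> vertex set set" where
  "face_sides m n = {hedge m n, hedge m (n + 1), vedge m n, vedge (m + 1) n}"

lemma grid_adj_sym: "grid_adj u v \<Longrightarrow> grid_adj v u"
  unfolding grid_adj_def by auto

lemma grid_adj_cases: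
  assumes "grid_adj u v"
  shows "v = (fst u + 1, snd u) \<or> v = (fst u - 1, snd u) \<or> v = (fst u, snd u + 1) \<or> v = (fst u, snd u - 1)"
  using assms unfolding grid_adj_def by (cases u; cases v) (auto simp: abs_if split: if_splits)

lemma finite_grid_neighbours: "finite {v. grid_adj u v}"
proof -
  have "{v. grid_adj u v} \<subseteq>
      {(fst u + 1, snd u), (fst u - 1, snd u), (fst u, snd u + 1), (fst u, snd u - 1)}"
    using grid_adj_cases by blast
  then show ?thesis by (rule finite_subset) simp
qed

lemma grid_adj_edge_cases:
  assumes "grid_adj u v"
  shows "\<exists>a b. {u, v} = hedge a b \<or> {u, v} = vedge a b"
proof -
  obtain p q where u: "u = (p, q)" by (cases u)
  from grid_adj_cases[OF assms] u
  consider "v = (p + 1, q)" | "v = (p - 1, q)" | "v = (p, q + 1)" | "v = (p, q - 1)" by auto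
  then show ?thesis
  proof cases
    case 1 then show ?thesis using u by (auto simp: hedge_def)
  next
    case 2 then have "{u, v} = hedge (p - 1) q" using u by (auto simp: hedge_def)
    then show ?thesis by blast
  next
    case 3 then show ?thesis using u by (auto simp: vedge_def)
  next
    case 4 then have "{u, v} = vedge p (q - 1)" using u by (auto simp: vedge_def)
    then show ?thesis by blast
  qed
qed

lemma hedge_eq_iff: "hedge a b = hedge a' b' \<longleftrightarrow> a = a' \<and> b = b'"
  by (auto simp: hedge_def doubleton_eq_iff)

lemma vedge_eq_iff: "vedge a b = vedge a' b' \<longleftrightarrow> a = a' \<and> b = b'"
  by (auto simp: vedge_def doubleton_eq_iff)

lemma hedge_neq_vedge: "hedge a b \<noteq> vedge a' b'"
  by (auto simp: hedge_def vedge_def doubleton_eq_iff)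

lemma face_side_grid_adj: "{u, v} \<in> face_sides m n \<Longrightarrow> grid_adj u v"
  unfolding face_sides_def hedge_def vedge_def grid_adj_def by (auto simp: doubleton_eq_iff)

lemma face_side_subset_corners:
  "e \<in> face_sides m n \<Longrightarrow> e \<subseteq> {(m, n), (m + 1, n), (m + 1, n + 1), (m, n + 1)}"
  unfolding face_sides_def hedge_def vedge_def by auto

lemma grid_adj_row: "grid_adj\<^sup>*\<^sup>* (p, q) (p + int k, q)"
proof (induction k)
  case (Suc k)
  then show ?case by (rule rtranclp.rtrancl_into_rtrancl) (simp add: grid_adj_def)
qed simp

lemma grid_adj_column: "grid_adj\<^sup>*\<^sup>* (p, q) (p, q + int k)"
proof (induction k)
  case (Suc k)
  then show ?case by (rule rtranclp.rtrancl_into_rtrancl) (simp add: grid_adj_def)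
qed simp

lemma symp_grid_adj_rtranclp: "symp grid_adj\<^sup>*\<^sup>*"
  by (rule symp_rtranclp) (simp add: sympI grid_adj_sym)

lemma grid_connected: "grid_adj\<^sup>*\<^sup>* u w"
proof -
  have row: "grid_adj\<^sup>*\<^sup>* (p, q) (p', q)" for p p' q
  proof (cases "p \<le> p'")
    case True
    then obtain k where "p' = p + int k" by (metis zle_iff_zadd)
    then show ?thesis using grid_adj_row by simp
  next
    case False
    then obtain k where "p = p' + int k" by (metis zle_iff_zadd nle_le)
    then show ?thesis using grid_adj_row[of p' q k] sympD[OF symp_grid_adj_rtranclp] by simp
  qed
  have column: "grid_adj\<^sup>*\<^sup>* (p, q) (p, q')" for p q q'
  proof (cases "q \<le> q'")
    case True
    then obtain k where "q' = q + int k" by (metis zle_iff_zadd)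
    then show ?thesis using grid_adj_column by simp
  next
    case False
    then obtain k where "q = q' + int k" by (metis zle_iff_zadd nle_le)
    then show ?thesis using grid_adj_column[of p q' k] sympD[OF symp_grid_adj_rtranclp] by simp
  qed
  have "grid_adj\<^sup>*\<^sup>* (fst u, snd u) (fst w, snd u)" by (rule row)
  also have "grid_adj\<^sup>*\<^sup>* (fst w, snd u) (fst w, snd w)" by (rule column)
  finally show ?thesis by simp
qed

lemma rtranclp_leaves_set:
  assumes "R\<^sup>*\<^sup>* a b" "a \<in> S" "b \<notin> S"
  shows "\<exists>x y. R x y \<and> x \<in> S \<and> y \<notin> S"
  using assms by induction blast+

lemma int_eq_if_steps_eq:
  fixes f :: "int \<Rightarrow> 'a"
  assumes "\<And>i. min a b \<le> i \<Longrightarrow> i < max a b \<Longrightarrow> f (i + 1) = f i"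
  shows "f a = f b"
proof -
  have shift: "f (c + int k) = f c" if "\<And>i. c \<le> i \<Longrightarrow> i < c + int k \<Longrightarrow> f (i + 1) = f i" for c k
    using that
  proof (induction k)
    case (Suc k)
    have "f (c + int (Suc k)) = f (c + int k + 1)" by (simp add: ac_simps)
    also have "\<dots> = f (c + int k)" using Suc.prems[of "c + int k"] by simp
    also have "\<dots> = f c" by (rule Suc.IH) (use Suc.prems in auto)
    finally show ?case .
  qed simp
  show ?thesis
  proof (cases "a \<le> b")
    case True
    then show ?thesis using shift[of a "nat (b - a)"] assms by simp
  next
    case False
    then show ?thesis using shift[of b "nat (a - b)"] assms by simp
  qed
qed

lemma square_ge_square_of_abs_ge:
  fixes x :: int assumes "k \<le> \<bar>x\<bar>" "0 \<le> k" shows "k * k \<le> x * x"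
proof -
  have "k * k \<le> \<bar>x\<bar> * \<bar>x\<bar>" using assms by (intro mult_mono) auto
  then show ?thesis by simp
qed

lemma int_sum_squares_eq_1:
  fixes x y :: int
  shows "x * x + y * y = 1 \<longleftrightarrow> (\<bar>x\<bar> = 1 \<and> y = 0) \<or> (x = 0 \<and> \<bar>y\<bar> = 1)"
proof -
  have "x = 0 \<or> \<bar>x\<bar> = 1 \<or> 4 \<le> x * x" "y = 0 \<or> \<bar>y\<bar> = 1 \<or> 4 \<le> y * y"
    using square_ge_square_of_abs_ge[of 2 x] square_ge_square_of_abs_ge[of 2 y] by linarith+
  moreover have "\<bar>z\<bar> = 1 \<Longrightarrow> z * z = 1" for z :: int by (metis abs_mult_self_eq mult_1)
  ultimately show ?thesis by auto
qed

lemma int_sum_squares_eq_4: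
  fixes x y :: int
  shows "x * x + y * y = 4 \<longleftrightarrow> (\<bar>x\<bar> = 2 \<and> y = 0) \<or> (x = 0 \<and> \<bar>y\<bar> = 2)"
proof -
  have "x = 0 \<or> \<bar>x\<bar> = 1 \<or> \<bar>x\<bar> = 2 \<or> 9 \<le> x * x" "y = 0 \<or> \<bar>y\<bar> = 1 \<or> \<bar>y\<bar> = 2 \<or> 9 \<le> y * y"
    using square_ge_square_of_abs_ge[of 3 x] square_ge_square_of_abs_ge[of 3 y] by linarith+
  moreover have "\<bar>z\<bar> = 1 \<Longrightarrow> z * z = 1" "\<bar>z\<bar> = 2 \<Longrightarrow> z * z = 4" for z :: int
    by (metis abs_mult_self_eq mult_1) (metis abs_mult_self_eq mult_2 numeral_Bit0 one_add_one)
  moreover have "0 \<le> x * x" "0 \<le> y * y" by auto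
  ultimately show ?thesis by auto
qed

lemma sqrt_of_int_eq_nat: "sqrt (real_of_int z) = real k \<longleftrightarrow> z = int (k * k)"
proof
  assume h: "sqrt (real_of_int z) = real k"
  then have "0 \<le> real_of_int z" by (metis of_nat_0_le_iff real_sqrt_ge_0_iff)
  then have "real_of_int z = real k * real k" using h by (metis power2_eq_square real_sqrt_pow2)
  then show "z = int (k * k)" by (metis of_int_eq_iff of_int_of_nat_eq of_nat_mult)
qed simp

lemma dist_gpt: "dist (gpt u) (gpt v) =
    sqrt (real_of_int ((fst u - fst v) * (fst u - fst v) + (snd u - snd v) * (snd u - snd v)))"
  unfolding gpt_def dist_Pair_Pair dist_real_def by (simp add: power2_eq_square)

lemma G_edge_iff_grid_adj: "G_edge {u, v} \<longleftrightarrow> grid_adj u v"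
proof -
  have "G_edge {u, v} \<longleftrightarrow> dist (gpt u) (gpt v) = 1"
    unfolding G_edge_def by (metis doubleton_eq_iff dist_commute)
  also have "\<dots> \<longleftrightarrow> sqrt (real_of_int ((fst u - fst v) * (fst u - fst v) + (snd u - snd v) * (snd u - snd v))) = real 1"
    by (simp only: dist_gpt of_nat_1)
  also have "\<dots> \<longleftrightarrow> grid_adj u v"
    unfolding sqrt_of_int_eq_nat grid_adj_def using int_sum_squares_eq_1[of "fst u - fst v" "snd u - snd v"]
    by (auto simp: abs_minus_commute)
  finally show ?thesis .
qed

section \<open>Parity potential of a set of edges\<close>

text \<open>Whether an odd number of \<open>j\<close> between \<open>0\<close> and \<open>b\<close> (exclusive of \<open>b\<close>) satisfy \<open>P\<close>;
  of the two sets below, at most one is nonempty.\<close>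

definition odd_count :: "(int \<Rightarrow> bool) \<Rightarrow> int \<Rightarrow> bool" where
  "odd_count P b \<longleftrightarrow>
     odd (card {j. 0 \<le> j \<and> j < b \<and> P j}) \<noteq> odd (card {j. b \<le> j \<and> j < 0 \<and> P j})"

lemma odd_count_0 [simp]: "\<not> odd_count P 0"
  unfolding odd_count_def by auto

lemma odd_count_succ: "odd_count P (b + 1) \<longleftrightarrow> odd_count P b \<noteq> P b"
proof (cases "0 \<le> b")
  case True
  have fin: "finite {j. 0 \<le> j \<and> j < b \<and> P j}" by (rule finite_subset[of _ "{0..<b}"]) auto
  have empty: "{j. b + 1 \<le> j \<and> j < 0 \<and> P j} = {}" "{j. b \<le> j \<and> j < 0 \<and> P j} = {}"
    using True by auto
  show ?thesis
  proof (cases "P b")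
    case True
    then have "{j. 0 \<le> j \<and> j < b + 1 \<and> P j} = insert b {j. 0 \<le> j \<and> j < b \<and> P j}"
      using \<open>0 \<le> b\<close> by auto
    then show ?thesis unfolding odd_count_def empty using fin True by simp
  next
    case False
    then have "{j. 0 \<le> j \<and> j < b + 1 \<and> P j} = {j. 0 \<le> j \<and> j < b \<and> P j}"
      by (auto simp: order_le_less zless_add1_eq)
    then show ?thesis unfolding odd_count_def empty using False by simp
  qed
next
  case False
  have fin: "finite {j. b + 1 \<le> j \<and> j < 0 \<and> P j}" by (rule finite_subset[of _ "{b + 1..<0}"]) auto
  have empty: "{j. 0 \<le> j \<and> j < b + 1 \<and> P j} = {}" "{j. 0 \<le> j \<and> j < b \<and> P j} = {}"
    using False by auto
  show ?thesis
  proof (cases "P b")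
    case True
    then have "{j. b \<le> j \<and> j < 0 \<and> P j} = insert b {j. b + 1 \<le> j \<and> j < 0 \<and> P j}"
      using False by auto
    then show ?thesis unfolding odd_count_def empty using fin True by simp
  next
    case not_P: False
    then have "{j. b \<le> j \<and> j < 0 \<and> P j} = {j. b + 1 \<le> j \<and> j < 0 \<and> P j}"
      by (auto simp: order_le_less zless_imp_add1_zle)
    then show ?thesis unfolding odd_count_def empty using not_P by simp
  qed
qed

definition even_faces :: "vertex set set \<Rightarrow> bool" where
  "even_faces E \<longleftrightarrow> (\<forall>m n. ((hedge m n \<in> E) = (hedge m (n + 1) \<in> E)) = ((vedge m n \<in> E) = (vedge (m + 1) n \<in> E)))"

text \<open>The parity of the number of edges of \<open>E\<close> crossed by the path that runs from the origin
  along row 0 to column \<open>fst v\<close>, and then along that column to \<open>v\<close>. When every face has an even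
  number of sides in \<open>E\<close>, this parity does not depend on the path.\<close>

definition potential :: "vertex set set \<Rightarrow> vertex \<Rightarrow> bool" where
  "potential E v \<longleftrightarrow> odd_count (\<lambda>i. hedge i 0 \<in> E) (fst v) \<noteq> odd_count (\<lambda>j. vedge (fst v) j \<in> E) (snd v)"

lemma potential_vstep: "potential E (a, b + 1) \<longleftrightarrow> potential E (a, b) \<noteq> (vedge a b \<in> E)"
  unfolding potential_def by (simp add: odd_count_succ) blast

lemma column_parity_difference:
  assumes "even_faces E"
  shows "odd_count (\<lambda>j. vedge (a + 1) j \<in> E) b \<noteq> odd_count (\<lambda>j. vedge a j \<in> E) b
    \<longleftrightarrow> (hedge a b \<in> E) \<noteq> (hedge a 0 \<in> E)"
proof (induction b rule: int_induct[where k = 0])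
  case base
  then show ?case by simp
next
  case (step1 i)
  have "((hedge a i \<in> E) = (hedge a (i + 1) \<in> E)) = ((vedge a i \<in> E) = (vedge (a + 1) i \<in> E))"
    using assms unfolding even_faces_def by blast
  with step1 show ?case by (simp add: odd_count_succ) blast
next
  case (step2 i)
  have "((hedge a (i - 1) \<in> E) = (hedge a (i - 1 + 1) \<in> E)) = ((vedge a (i - 1) \<in> E) = (vedge (a + 1) (i - 1) \<in> E))"
    using assms unfolding even_faces_def by blast
  with step2 show ?case
    using odd_count_succ[of "\<lambda>j. vedge (a + 1) j \<in> E" "i - 1"] odd_count_succ[of "\<lambda>j. vedge a j \<in> E" "i - 1"]
    by simp blast
qed

lemma potential_hstep:
  assumes "even_faces E"
  shows "potential E (a + 1, b) \<longleftrightarrow> potential E (a, b) \<noteq> (hedge a b \<in> E)"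
  using column_parity_difference[OF assms, of a b] unfolding potential_def
  by (simp add: odd_count_succ) blast

lemma potential_flip:
  assumes "even_faces E" and "grid_adj u v"
  shows "potential E u \<noteq> potential E v \<longleftrightarrow> {u, v} \<in> E"
proof -
  obtain p q where u: "u = (p, q)" by (cases u)
  from grid_adj_cases[OF assms(2)] u
  consider "v = (p + 1, q)" | "v = (p - 1, q)" | "v = (p, q + 1)" | "v = (p, q - 1)" by auto
  then show ?thesis
  proof cases
    case 1
    then show ?thesis using potential_hstep[OF assms(1), of p q] u by (simp add: hedge_def) blast
  next
    case 2
    then show ?thesis using potential_hstep[OF assms(1), of "p - 1" q] u
      by (simp add: hedge_def insert_commute) blast
  next
    case 3
    then show ?thesis using potential_vstep[of E p q] u by (simp add: vedge_def) blast
  next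
    case 4
    then show ?thesis using potential_vstep[of E p "q - 1"] u
      by (simp add: vedge_def insert_commute) blast
  qed
qed

lemma potential_const_on_row:
  assumes "even_faces E" and "\<And>i. hedge i b \<notin> E"
  shows "potential E (a, b) = potential E (a', b)"
  by (rule int_eq_if_steps_eq[where f = "\<lambda>i. potential E (i, b)"])
    (simp add: potential_hstep[OF assms(1)] assms(2))

lemma potential_const_on_column:
  assumes "\<And>j. vedge a j \<notin> E"
  shows "potential E (a, b) = potential E (a, b')"
  by (rule int_eq_if_steps_eq[where f = "\<lambda>j. potential E (a, j)"])
    (simp add: potential_vstep assms)

lemma potential_outside_box:
  assumes "even_faces E" and bounded: "\<forall>e\<in>E. \<forall>w\<in>e. \<bar>fst w\<bar> \<le> N \<and> \<bar>snd w\<bar> \<le> N"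
    and outside: "N < \<bar>fst v\<bar> \<or> N < \<bar>snd v\<bar>"
  shows "potential E v = potential E (N + 1, N + 1)"
proof -
  obtain p q where v: "v = (p, q)" by (cases v)
  have no_vedge: "vedge a j \<notin> E" if "N < \<bar>a\<bar>" for a j
    using bounded that unfolding vedge_def by fastforce
  have no_hedge: "hedge i b \<notin> E" if "N < \<bar>b\<bar>" for i b
    using bounded that unfolding hedge_def by fastforce
  show ?thesis
  proof (cases "N < \<bar>p\<bar>")
    case True
    have "potential E (p, q) = potential E (p, N + 1)"
      by (rule potential_const_on_column) (use no_vedge True in auto)
    also have "\<dots> = potential E (N + 1, N + 1)"
      by (rule potential_const_on_row[OF assms(1)]) (use no_hedge True in auto)
    finally show ?thesis using v by simp
  next
    case False
    then have "N < \<bar>q\<bar>" using outside v by auto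
    then have "potential E (p, q) = potential E (N + 1, q)"
      by (intro potential_const_on_row[OF assms(1)] no_hedge)
    also have "\<dots> = potential E (N + 1, N + 1)"
      by (rule potential_const_on_column) (use no_vedge \<open>N < \<bar>q\<bar>\<close> in auto)
    finally show ?thesis using v by simp
  qed
qed

section \<open>Boundary darts and interfaces\<close>

text \<open>A dart \<open>(x, y)\<close> is an oriented grid edge. The face to its left has the corners
  \<open>x\<close>, \<open>y\<close>, \<open>left_of_head (x, y)\<close> and \<open>left_of_tail (x, y)\<close>: the last two are \<open>y\<close> and \<open>x\<close>
  shifted by \<open>y - x\<close> rotated through a right angle.\<close>

definition left_of_tail :: "vertex \<times> vertex \<Rightarrow> vertex" where
  "left_of_tail d = (fst (fst d) - (snd (snd d) - snd (fst d)), snd (fst d) + (fst (snd d) - fst (fst d)))"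

definition left_of_head :: "vertex \<times> vertex \<Rightarrow> vertex" where
  "left_of_head d = (fst (snd d) - (snd (snd d) - snd (fst d)), snd (snd d) + (fst (snd d) - fst (fst d)))"

definition boundary_dart :: "vertex set \<Rightarrow> vertex \<times> vertex \<Rightarrow> bool" where
  "boundary_dart K d \<longleftrightarrow> grid_adj (fst d) (snd d) \<and> fst d \<in> K \<and> snd d \<notin> K"

text \<open>The next boundary dart of \<open>K\<close> met when turning around the face to the left of \<open>d\<close>,
  starting from the tail of \<open>d\<close>.\<close>

definition next_dart :: "vertex set \<Rightarrow> vertex \<times> vertex \<Rightarrow> vertex \<times> vertex" where
  "next_dart K d =
    (if left_of_tail d \<notin> K then (fst d, left_of_tail d)
     else if left_of_head d \<notin> K then (left_of_tail d, left_of_head d)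
     else (left_of_head d, snd d))"

lemma next_dart_east: "next_dart K ((m, n), (m + 1, n)) =
   (if (m, n + 1) \<notin> K then ((m, n), (m, n + 1))
    else if (m + 1, n + 1) \<notin> K then ((m, n + 1), (m + 1, n + 1))
    else ((m + 1, n + 1), (m + 1, n)))"
  unfolding next_dart_def left_of_tail_def left_of_head_def by (simp add: ac_simps)

lemma next_dart_north: "next_dart K ((m + 1, n), (m + 1, n + 1)) =
   (if (m, n) \<notin> K then ((m + 1, n), (m, n))
    else if (m, n + 1) \<notin> K then ((m, n), (m, n + 1))
    else ((m, n + 1), (m + 1, n + 1)))"
  unfolding next_dart_def left_of_tail_def left_of_head_def by (simp add: ac_simps)

lemma next_dart_west: "next_dart K ((m + 1, n + 1), (m, n + 1)) =
   (if (m + 1, n) \<notin> K then ((m + 1, n + 1), (m + 1, n))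
    else if (m, n) \<notin> K then ((m + 1, n), (m, n))
    else ((m, n), (m, n + 1)))"
  unfolding next_dart_def left_of_tail_def left_of_head_def by (simp add: ac_simps)

lemma next_dart_south: "next_dart K ((m, n + 1), (m, n)) =
   (if (m + 1, n + 1) \<notin> K then ((m, n + 1), (m + 1, n + 1))
    else if (m + 1, n) \<notin> K then ((m + 1, n + 1), (m + 1, n))
    else ((m + 1, n), (m, n)))"
  unfolding next_dart_def left_of_tail_def left_of_head_def by (simp add: ac_simps)

lemma left_face_of_dart:
  assumes "grid_adj x y"
  shows "\<exists>m n. {x, y} \<in> face_sides m n \<and> {x, left_of_tail (x, y)} \<in> face_sides m n
     \<and> {left_of_tail (x, y), left_of_head (x, y)} \<in> face_sides m n
     \<and> grid_adj x (left_of_tail (x, y)) \<and> grid_adj (left_of_tail (x, y)) (left_of_head (x, y))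
     \<and> grid_adj (left_of_head (x, y)) y"
proof -
  obtain p q where x: "x = (p, q)" by (cases x)
  note defs = left_of_tail_def left_of_head_def face_sides_def hedge_def vedge_def grid_adj_def
  from grid_adj_cases[OF assms] x
  consider "y = (p + 1, q)" | "y = (p - 1, q)" | "y = (p, q + 1)" | "y = (p, q - 1)" by auto
  then show ?thesis
  proof cases
    case 1
    show ?thesis by (rule exI[of _ p], rule exI[of _ q]) (use 1 x in \<open>auto simp: defs insert_commute\<close>)
  next
    case 2
    show ?thesis by (rule exI[of _ "p - 1"], rule exI[of _ "q - 1"]) (use 2 x in \<open>auto simp: defs insert_commute\<close>)
  next
    case 3
    show ?thesis by (rule exI[of _ "p - 1"], rule exI[of _ q]) (use 3 x in \<open>auto simp: defs insert_commute\<close>)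
  next
    case 4
    show ?thesis by (rule exI[of _ p], rule exI[of _ "q - 1"]) (use 4 x in \<open>auto simp: defs insert_commute\<close>)
  qed
qed

lemma boundary_dart_next: "boundary_dart K d \<Longrightarrow> boundary_dart K (next_dart K d)"
  using left_face_of_dart[of "fst d" "snd d"] unfolding boundary_dart_def next_dart_def
  by (cases d) (auto simp: grid_adj_sym)

definition avoiding_adj :: "vertex set set \<Rightarrow> vertex \<Rightarrow> vertex \<Rightarrow> bool" where
  "avoiding_adj X u v \<longleftrightarrow> grid_adj u v \<and> {u, v} \<notin> X"

definition face_linked :: "vertex set set \<Rightarrow> vertex set \<Rightarrow> vertex set \<Rightarrow> bool" where
  "face_linked X e e' \<longleftrightarrow> e \<in> X \<and> e' \<in> X \<and> (\<exists>m n. e \<in> face_sides m n \<and> e' \<in> face_sides m n)"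

text \<open>The properties of the grid edges crossed by an infinite contour on which the argument rests.\<close>

locale interface =
  fixes \<omega> :: "vertex \<Rightarrow> bool" and X :: "vertex set set" and v\<^sub>0 :: vertex
  assumes grid_edges: "e \<in> X \<Longrightarrow> \<exists>u v. e = {u, v} \<and> grid_adj u v"
    and disagree: "{u, v} \<in> X \<Longrightarrow> \<omega> u \<noteq> \<omega> v"
    and face_complete: "e \<in> X \<Longrightarrow> e \<in> face_sides m n \<Longrightarrow> {u, v} \<in> face_sides m n \<Longrightarrow> \<omega> u \<noteq> \<omega> v
      \<Longrightarrow> {u, v} \<in> X"
    and face_connected: "e \<in> X \<Longrightarrow> e' \<in> X \<Longrightarrow> (face_linked X)\<^sup>*\<^sup>* e e'"
    and infinite_edges: "infinite X"
    and infinite_component: "infinite {w. (avoiding_adj X)\<^sup>*\<^sup>* v\<^sub>0 w}"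
begin

definition component :: "vertex set" where
  "component = {w. (avoiding_adj X)\<^sup>*\<^sup>* v\<^sub>0 w}"

lemma v0_in_component: "v\<^sub>0 \<in> component"
  by (simp add: component_def)

lemma component_closed: "u \<in> component \<Longrightarrow> grid_adj u w \<Longrightarrow> {u, w} \<notin> X \<Longrightarrow> w \<in> component"
  unfolding component_def by (auto intro: rtranclp.rtrancl_into_rtrancl simp: avoiding_adj_def)

lemma cluster_subset_component:
  assumes "x \<in> component" and "(same_adj \<omega>)\<^sup>*\<^sup>* x w"
  shows "w \<in> component"
  using assms(2,1)
proof (induction rule: rtranclp_induct)
  case (step a b)
  then have "grid_adj a b" "\<omega> a = \<omega> b" by (auto simp: same_adj_def G_edge_iff_grid_adj)
  then show ?case using component_closed step disagree by blast
qed

lemma even_faces_edges: "even_faces X"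
  unfolding even_faces_def
proof (intro allI)
  fix m n
  have side_in_X: "s \<in> X \<longleftrightarrow> \<omega> u \<noteq> \<omega> v" if "s \<in> face_sides m n" "s = {u, v}" "\<exists>t\<in>face_sides m n. t \<in> X"
    for s u v
    using that disagree face_complete by blast
  show "((hedge m n \<in> X) = (hedge m (n + 1) \<in> X)) = ((vedge m n \<in> X) = (vedge (m + 1) n \<in> X))"
  proof (cases "\<exists>t\<in>face_sides m n. t \<in> X")
    case True
    then show ?thesis
      using side_in_X[of "hedge m n" "(m, n)" "(m + 1, n)"] side_in_X[of "hedge m (n + 1)" "(m, n + 1)" "(m + 1, n + 1)"]
        side_in_X[of "vedge m n" "(m, n)" "(m, n + 1)"] side_in_X[of "vedge (m + 1) n" "(m + 1, n)" "(m + 1, n + 1)"]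
      by (auto simp: face_sides_def hedge_def vedge_def)
  next
    case False
    then show ?thesis by (auto simp: face_sides_def)
  qed
qed

text \<open>The potential of \<open>X\<close> itself is constant on the component and flips across every edge of
  \<open>X\<close>, so no edge of \<open>X\<close> has both ends in the component.\<close>

lemma potential_on_component: "w \<in> component \<Longrightarrow> potential X w = potential X v\<^sub>0"
  unfolding component_def mem_Collect_eq
proof (induction rule: rtranclp_induct)
  case (step a b)
  then show ?case using potential_flip[OF even_faces_edges, of a b] by (auto simp: avoiding_adj_def)
qed simp

lemma edge_leaves_component: "{u, v} \<in> X \<Longrightarrow> grid_adj u v \<Longrightarrow> u \<in> component \<Longrightarrow> v \<notin> component"
  using potential_flip[OF even_faces_edges] potential_on_component by metis

lemma boundary_dart_edge: "boundary_dart component (x, y) \<Longrightarrow> {x, y} \<in> X"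
  using component_closed[of x y] unfolding boundary_dart_def by auto

lemma agree_on_face_in_component:
  "e \<in> X \<Longrightarrow> e \<in> face_sides m n \<Longrightarrow> {u, v} \<in> face_sides m n \<Longrightarrow> u \<in> component \<Longrightarrow> v \<in> component \<Longrightarrow> \<omega> u = \<omega> v"
  using face_complete edge_leaves_component face_side_grid_adj by blast

lemma next_dart_same_cluster:
  assumes "boundary_dart component d"
  shows "(same_adj \<omega>)\<^sup>*\<^sup>* (fst d) (fst (next_dart component d))"
proof -
  obtain x y where d: "d = (x, y)" by (cases d)
  have xy: "grid_adj x y" "x \<in> component" using assms d by (auto simp: boundary_dart_def)
  let ?a = "left_of_tail (x, y)" and ?b = "left_of_head (x, y)"
  obtain m n where face: "{x, y} \<in> face_sides m n" "{x, ?a} \<in> face_sides m n" "{?a, ?b} \<in> face_sides m n"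
    "grid_adj x ?a" "grid_adj ?a ?b"
    using left_face_of_dart[OF xy(1)] by blast
  have X: "{x, y} \<in> X" using boundary_dart_edge assms d by simp
  show ?thesis
  proof (cases "?a \<in> component")
    case False
    then show ?thesis using d by (simp add: next_dart_def)
  next
    case a_in: True
    have "same_adj \<omega> x ?a"
      using agree_on_face_in_component[OF X face(1,2) xy(2) a_in] face(4) by (simp add: same_adj_def G_edge_iff_grid_adj)
    show ?thesis
    proof (cases "?b \<in> component")
      case False
      then show ?thesis using d a_in \<open>same_adj \<omega> x ?a\<close> by (simp add: next_dart_def)
    next
      case True
      have "same_adj \<omega> ?a ?b"
        using agree_on_face_in_component[OF X face(1,3) a_in True] face(5) by (simp add: same_adj_def G_edge_iff_grid_adj)
      then show ?thesis using d a_in True \<open>same_adj \<omega> x ?a\<close> by (simp add: next_dart_def)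
    qed
  qed
qed

lemma boundary_dart_exists: "\<exists>d. boundary_dart component d"
proof -
  obtain e where e: "e \<in> X" using infinite_edges by (metis finite.emptyI ex_in_conv)
  obtain u v where uv: "e = {u, v}" "grid_adj u v" using grid_edges[OF e] by blast
  have "u \<notin> component \<or> v \<notin> component" using edge_leaves_component e uv by blast
  then obtain w where "w \<notin> component" by blast
  then obtain x y where "grid_adj x y" "x \<in> component" "y \<notin> component"
    using rtranclp_leaves_set[OF grid_connected v0_in_component] by blast
  then show ?thesis unfolding boundary_dart_def by (intro exI[of _ "(x, y)"]) simp
qed

end

section \<open>Interfaces meet infinite clusters\<close>

locale finite_boundary_walk = interface +
  fixes d\<^sub>0 :: "vertex \<times> vertex"
  assumes boundary_d0: "boundary_dart component d\<^sub>0"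
    and finite_cluster: "finite {w. (same_adj \<omega>)\<^sup>*\<^sup>* (fst d\<^sub>0) w}"
begin

definition walk_step :: "vertex \<times> vertex \<Rightarrow> vertex \<times> vertex \<Rightarrow> bool" where
  "walk_step d d' \<longleftrightarrow> boundary_dart component d \<and> boundary_dart component d' \<and> (d' = next_dart component d \<or> d = next_dart component d')"

definition orbit :: "(vertex \<times> vertex) set" where
  "orbit = {d. walk_step\<^sup>*\<^sup>* d\<^sub>0 d}"

lemma orbit_boundary: "d \<in> orbit \<Longrightarrow> boundary_dart component d"
  unfolding orbit_def mem_Collect_eq
  by (induction rule: rtranclp_induct) (auto simp: boundary_d0 walk_step_def)

lemma orbit_next_iff:
  assumes "boundary_dart component d"
  shows "next_dart component d \<in> orbit \<longleftrightarrow> d \<in> orbit"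
proof -
  have "walk_step d (next_dart component d)" "walk_step (next_dart component d) d"
    using assms boundary_dart_next by (auto simp: walk_step_def)
  then show ?thesis unfolding orbit_def mem_Collect_eq
    by (meson rtranclp.rtrancl_into_rtrancl)
qed

lemma orbit_same_cluster: "d \<in> orbit \<Longrightarrow> (same_adj \<omega>)\<^sup>*\<^sup>* (fst d\<^sub>0) (fst d)"
  unfolding orbit_def mem_Collect_eq
proof (induction rule: rtranclp_induct)
  case (step a b)
  have "symp (same_adj \<omega>)"
    by (rule sympI) (simp add: same_adj_def G_edge_iff_grid_adj grid_adj_sym)
  then have sym: "symp (same_adj \<omega>)\<^sup>*\<^sup>*" by (rule symp_rtranclp)
  from step(2) consider "boundary_dart component a" "b = next_dart component a" | "boundary_dart component b" "a = next_dart component b"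
    unfolding walk_step_def by blast
  then have "(same_adj \<omega>)\<^sup>*\<^sup>* (fst a) (fst b)"
  proof cases
    case 1
    then show ?thesis using next_dart_same_cluster by simp
  next
    case 2
    then have "(same_adj \<omega>)\<^sup>*\<^sup>* (fst b) (fst a)" using next_dart_same_cluster by simp
    then show ?thesis by (rule sympD[OF sym])
  qed
  with step(3) show ?case by (rule rtranclp_trans)
qed simp

lemma finite_orbit: "finite orbit"
proof (rule finite_subset)
  show "orbit \<subseteq> Sigma {w. (same_adj \<omega>)\<^sup>*\<^sup>* (fst d\<^sub>0) w} (\<lambda>x. {y. grid_adj x y})"
    using orbit_same_cluster orbit_boundary by (auto simp: boundary_dart_def)
  show "finite (Sigma {w. (same_adj \<omega>)\<^sup>*\<^sup>* (fst d\<^sub>0) w} (\<lambda>x. {y. grid_adj x y}))"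
    using finite_cluster finite_grid_neighbours by (rule finite_SigmaI)
qed

definition E :: "vertex set set" where
  "E = (\<lambda>d. {fst d, snd d}) ` orbit"

lemma finite_E: "finite E"
  using finite_orbit by (simp add: E_def)

lemma E_subset: "E \<subseteq> X"
  using orbit_boundary boundary_dart_edge by (auto simp: E_def)

lemma mem_E_iff: "{u, v} \<in> E \<longleftrightarrow> (u, v) \<in> orbit \<or> (v, u) \<in> orbit"
  unfolding E_def by (auto simp: doubleton_eq_iff image_iff) (metis fst_conv snd_conv)+

text \<open>The local picture of the orbit at one face; all facts about \<open>E\<close> at a face follow from it
  by propositional reasoning.\<close>

lemma orbit_at_face:
  fixes m n :: int
  defines "A \<equiv> (m, n)" and "B \<equiv> (m + 1, n)" and "C \<equiv> (m + 1, n + 1)" and "D \<equiv> (m, n + 1)"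
  shows "(A, B) \<in> orbit \<Longrightarrow> A \<in> component \<and> B \<notin> component" "(B, A) \<in> orbit \<Longrightarrow> B \<in> component \<and> A \<notin> component"
   "(B, C) \<in> orbit \<Longrightarrow> B \<in> component \<and> C \<notin> component" "(C, B) \<in> orbit \<Longrightarrow> C \<in> component \<and> B \<notin> component"
   "(C, D) \<in> orbit \<Longrightarrow> C \<in> component \<and> D \<notin> component" "(D, C) \<in> orbit \<Longrightarrow> D \<in> component \<and> C \<notin> component"
   "(D, A) \<in> orbit \<Longrightarrow> D \<in> component \<and> A \<notin> component" "(A, D) \<in> orbit \<Longrightarrow> A \<in> component \<and> D \<notin> component"
   "A \<in> component \<and> B \<notin> component \<Longrightarrow> (A, B) \<in> orbit \<longleftrightarrow>
      (if D \<notin> component then (A, D) \<in> orbit else if C \<notin> component then (D, C) \<in> orbit else (C, B) \<in> orbit)"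
   "B \<in> component \<and> C \<notin> component \<Longrightarrow> (B, C) \<in> orbit \<longleftrightarrow>
      (if A \<notin> component then (B, A) \<in> orbit else if D \<notin> component then (A, D) \<in> orbit else (D, C) \<in> orbit)"
   "C \<in> component \<and> D \<notin> component \<Longrightarrow> (C, D) \<in> orbit \<longleftrightarrow>
      (if B \<notin> component then (C, B) \<in> orbit else if A \<notin> component then (B, A) \<in> orbit else (A, D) \<in> orbit)"
   "D \<in> component \<and> A \<notin> component \<Longrightarrow> (D, A) \<in> orbit \<longleftrightarrow>
      (if C \<notin> component then (D, C) \<in> orbit else if B \<notin> component then (C, B) \<in> orbit else (B, A) \<in> orbit)"
proof -
  have leave: "(x, y) \<in> orbit \<Longrightarrow> x \<in> component \<and> y \<notin> component" for x y
    using orbit_boundary[of "(x, y)"] by (simp add: boundary_dart_def)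
  have turn: "(x, y) \<in> orbit \<longleftrightarrow> next_dart component (x, y) \<in> orbit" if "x \<in> component \<and> y \<notin> component" "grid_adj x y" for x y
    using orbit_next_iff that by (simp add: boundary_dart_def)
  show "(A, B) \<in> orbit \<Longrightarrow> A \<in> component \<and> B \<notin> component" "(B, A) \<in> orbit \<Longrightarrow> B \<in> component \<and> A \<notin> component"
   "(B, C) \<in> orbit \<Longrightarrow> B \<in> component \<and> C \<notin> component" "(C, B) \<in> orbit \<Longrightarrow> C \<in> component \<and> B \<notin> component"
   "(C, D) \<in> orbit \<Longrightarrow> C \<in> component \<and> D \<notin> component" "(D, C) \<in> orbit \<Longrightarrow> D \<in> component \<and> C \<notin> component"
   "(D, A) \<in> orbit \<Longrightarrow> D \<in> component \<and> A \<notin> component" "(A, D) \<in> orbit \<Longrightarrow> A \<in> component \<and> D \<notin> component"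
    by (fact leave)+
  have adj: "grid_adj A B" "grid_adj B C" "grid_adj C D" "grid_adj D A"
    by (simp_all add: A_def B_def C_def D_def grid_adj_def)
  show "A \<in> component \<and> B \<notin> component \<Longrightarrow> (A, B) \<in> orbit \<longleftrightarrow>
      (if D \<notin> component then (A, D) \<in> orbit else if C \<notin> component then (D, C) \<in> orbit else (C, B) \<in> orbit)"
    using turn[OF _ adj(1)] by (simp add: A_def B_def C_def D_def next_dart_east)
  show "B \<in> component \<and> C \<notin> component \<Longrightarrow> (B, C) \<in> orbit \<longleftrightarrow>
      (if A \<notin> component then (B, A) \<in> orbit else if D \<notin> component then (A, D) \<in> orbit else (D, C) \<in> orbit)"
    using turn[OF _ adj(2)] by (simp add: A_def B_def C_def D_def next_dart_north)
  show "C \<in> component \<and> D \<notin> component \<Longrightarrow> (C, D) \<in> orbit \<longleftrightarrow>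
      (if B \<notin> component then (C, B) \<in> orbit else if A \<notin> component then (B, A) \<in> orbit else (A, D) \<in> orbit)"
    using turn[OF _ adj(3)] by (simp add: A_def B_def C_def D_def next_dart_west)
  show "D \<in> component \<and> A \<notin> component \<Longrightarrow> (D, A) \<in> orbit \<longleftrightarrow>
      (if C \<notin> component then (D, C) \<in> orbit else if B \<notin> component then (C, B) \<in> orbit else (B, A) \<in> orbit)"
    using turn[OF _ adj(4)] by (simp add: A_def B_def C_def D_def next_dart_south)
qed

lemma even_faces_E: "even_faces E"
  unfolding even_faces_def
proof (intro allI)
  fix m n :: int
  have sides: "hedge m n = {(m, n), (m + 1, n)}" "hedge m (n + 1) = {(m, n + 1), (m + 1, n + 1)}"
    "vedge m n = {(m, n), (m, n + 1)}" "vedge (m + 1) n = {(m + 1, n), (m + 1, n + 1)}"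
    by (auto simp: hedge_def vedge_def)
  show "((hedge m n \<in> E) = (hedge m (n + 1) \<in> E)) = ((vedge m n \<in> E) = (vedge (m + 1) n \<in> E))"
    unfolding sides mem_E_iff using orbit_at_face[of m n] unfolding if_bool_eq_conj by sat
qed

definition N :: int where
  "N = Max (insert 0 ((\<lambda>w. max \<bar>fst w\<bar> \<bar>snd w\<bar>) ` \<Union>E))"

lemma E_bounded: "\<forall>e\<in>E. \<forall>w\<in>e. \<bar>fst w\<bar> \<le> N \<and> \<bar>snd w\<bar> \<le> N"
proof (intro ballI)
  fix e w
  assume "e \<in> E" "w \<in> e"
  moreover have "finite (\<Union>E)" using finite_E by (auto simp: E_def)
  ultimately have "max \<bar>fst w\<bar> \<bar>snd w\<bar> \<le> N" unfolding N_def by (intro Max_ge) auto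
  then show "\<bar>fst w\<bar> \<le> N \<and> \<bar>snd w\<bar> \<le> N" by simp
qed

definition enclosed :: "vertex \<Rightarrow> bool" where
  "enclosed w \<longleftrightarrow> potential E w \<noteq> potential E (N + 1, N + 1)"

lemma not_enclosed_outside_box:
  assumes "N < \<bar>fst w\<bar> \<or> N < \<bar>snd w\<bar>"
  shows "\<not> enclosed w"
  using potential_outside_box[OF even_faces_E E_bounded assms] unfolding enclosed_def by simp

lemma enclosed_flip:
  assumes "grid_adj u v"
  shows "enclosed u \<noteq> enclosed v \<longleftrightarrow> {u, v} \<in> E"
  using potential_flip[OF even_faces_E assms] unfolding enclosed_def by blast

lemma not_enclosed_component: "w \<in> component \<Longrightarrow> \<not> enclosed w"
proof -
  have const: "potential E w = potential E v\<^sub>0" if "w \<in> component" for w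
    using that unfolding component_def mem_Collect_eq
  proof (induction rule: rtranclp_induct)
    case (step a b)
    then show ?case using potential_flip[OF even_faces_E, of a b] E_subset by (auto simp: avoiding_adj_def)
  qed simp
  have "\<not> component \<subseteq> {-N..N} \<times> {-N..N}"
    using infinite_component finite_subset[of component "{-N..N} \<times> {-N..N}"] unfolding component_def by auto
  then obtain k where "k \<in> component" "k \<notin> {-N..N} \<times> {-N..N}" by blast
  then have "k \<in> component" "N < \<bar>fst k\<bar> \<or> N < \<bar>snd k\<bar>" by (cases k, auto)+
  then show "w \<in> component \<Longrightarrow> \<not> enclosed w"
    using not_enclosed_outside_box const unfolding enclosed_def by metis
qed

lemma enclosed_corners:
  assumes "\<exists>s\<in>face_sides m n. s \<in> E"
  shows "\<forall>w\<in>{(m, n), (m + 1, n), (m + 1, n + 1), (m, n + 1)}. w \<notin> component \<longrightarrow> enclosed w"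
proof -
  have sides: "hedge m n = {(m, n), (m + 1, n)}" "hedge m (n + 1) = {(m, n + 1), (m + 1, n + 1)}"
    "vedge m n = {(m, n), (m, n + 1)}" "vedge (m + 1) n = {(m + 1, n), (m + 1, n + 1)}"
    by (auto simp: hedge_def vedge_def)
  have darts: "((m, n), (m + 1, n)) \<in> orbit \<or> ((m + 1, n), (m, n)) \<in> orbit
     \<or> ((m + 1, n), (m + 1, n + 1)) \<in> orbit \<or> ((m + 1, n + 1), (m + 1, n)) \<in> orbit
     \<or> ((m + 1, n + 1), (m, n + 1)) \<in> orbit \<or> ((m, n + 1), (m + 1, n + 1)) \<in> orbit
     \<or> ((m, n + 1), (m, n)) \<in> orbit \<or> ((m, n), (m, n + 1)) \<in> orbit"
    using assms unfolding face_sides_def sides by (auto simp: mem_E_iff)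
  have flips: "enclosed (m, n) \<noteq> enclosed (m + 1, n) \<longleftrightarrow> ((m, n), (m + 1, n)) \<in> orbit \<or> ((m + 1, n), (m, n)) \<in> orbit"
    "enclosed (m + 1, n) \<noteq> enclosed (m + 1, n + 1) \<longleftrightarrow> ((m + 1, n), (m + 1, n + 1)) \<in> orbit \<or> ((m + 1, n + 1), (m + 1, n)) \<in> orbit"
    "enclosed (m + 1, n + 1) \<noteq> enclosed (m, n + 1) \<longleftrightarrow> ((m + 1, n + 1), (m, n + 1)) \<in> orbit \<or> ((m, n + 1), (m + 1, n + 1)) \<in> orbit"
    "enclosed (m, n + 1) \<noteq> enclosed (m, n) \<longleftrightarrow> ((m, n + 1), (m, n)) \<in> orbit \<or> ((m, n), (m, n + 1)) \<in> orbit"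
    using enclosed_flip[of "(m, n)" "(m + 1, n)"] enclosed_flip[of "(m + 1, n)" "(m + 1, n + 1)"]
      enclosed_flip[of "(m + 1, n + 1)" "(m, n + 1)"] enclosed_flip[of "(m, n + 1)" "(m, n)"]
    by (simp_all add: grid_adj_def mem_E_iff)
  have "((m, n) \<notin> component \<longrightarrow> enclosed (m, n)) \<and> ((m + 1, n) \<notin> component \<longrightarrow> enclosed (m + 1, n))
    \<and> ((m + 1, n + 1) \<notin> component \<longrightarrow> enclosed (m + 1, n + 1)) \<and> ((m, n + 1) \<notin> component \<longrightarrow> enclosed (m, n + 1))"
    using orbit_at_face[of m n] flips darts
      not_enclosed_component[of "(m, n)"] not_enclosed_component[of "(m + 1, n)"] not_enclosed_component[of "(m + 1, n + 1)"] not_enclosed_component[of "(m, n + 1)"]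
    unfolding if_bool_eq_conj by sat
  then show ?thesis by simp
qed

lemma corners_alike_without_E:
  assumes "\<forall>s\<in>face_sides m n. s \<notin> E"
  shows "\<forall>z\<in>{(m, n), (m + 1, n), (m + 1, n + 1), (m, n + 1)}. enclosed z = enclosed (m, n)"
proof -
  have not_E: "{(m, n), (m + 1, n)} \<notin> E" "{(m, n + 1), (m + 1, n + 1)} \<notin> E"
    "{(m, n), (m, n + 1)} \<notin> E" "{(m + 1, n), (m + 1, n + 1)} \<notin> E"
    using assms unfolding face_sides_def hedge_def vedge_def by auto
  have "enclosed (m, n) = enclosed (m + 1, n)" "enclosed (m, n + 1) = enclosed (m + 1, n + 1)"
    "enclosed (m, n) = enclosed (m, n + 1)"
    using enclosed_flip[of "(m, n)" "(m + 1, n)"] enclosed_flip[of "(m, n + 1)" "(m + 1, n + 1)"]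
      enclosed_flip[of "(m, n)" "(m, n + 1)"] not_E by (auto simp: grid_adj_def)
  then show ?thesis by simp
qed

definition covered :: "vertex set \<Rightarrow> bool" where
  "covered e \<longleftrightarrow> e \<in> E \<or> (\<forall>w\<in>e. enclosed w)"

lemma covered_step:
  assumes "face_linked X e e'" and "covered e"
  shows "covered e'"
proof -
  obtain m n where face: "e \<in> face_sides m n" "e' \<in> face_sides m n" and "e' \<in> X"
    using assms(1) unfolding face_linked_def by blast
  obtain u v where uv: "e' = {u, v}" "grid_adj u v" using grid_edges[OF \<open>e' \<in> X\<close>] by blast
  let ?corners = "{(m, n), (m + 1, n), (m + 1, n + 1), (m, n + 1)}"
  have corners: "u \<in> ?corners" "v \<in> ?corners"
    using face_side_subset_corners[OF face(2)] uv by auto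
  show ?thesis
  proof (cases "\<exists>s\<in>face_sides m n. s \<in> E")
    case True
    show ?thesis
    proof (cases "e' \<in> E")
      case False
      then have "enclosed u = enclosed v" using enclosed_flip[OF uv(2)] uv(1) by auto
      moreover have "u \<notin> component \<or> v \<notin> component" using edge_leaves_component \<open>e' \<in> X\<close> uv by blast
      then have "enclosed u \<or> enclosed v" using enclosed_corners[OF True] corners by blast
      ultimately show ?thesis using uv(1) by (simp add: covered_def)
    qed (simp add: covered_def)
  next
    case False
    then have alike: "\<forall>z\<in>?corners. enclosed z = enclosed (m, n)" by (intro corners_alike_without_E) blast
    have "e \<notin> E" using False face(1) by auto
    with assms(2) have "\<forall>w\<in>e. enclosed w" by (simp add: covered_def)
    moreover have "e \<noteq> {}" "e \<subseteq> ?corners"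
      using face(1) face_side_subset_corners by (auto simp: face_sides_def hedge_def vedge_def)
    ultimately obtain w where "w \<in> ?corners" "enclosed w" by blast
    then have "enclosed (m, n)" using alike by metis
    then have "enclosed u \<and> enclosed v" using alike corners by blast
    then show ?thesis using uv(1) by (simp add: covered_def)
  qed
qed

lemma inconsistent: False
proof -
  obtain x y where d0: "d\<^sub>0 = (x, y)" by (cases d\<^sub>0)
  have "d\<^sub>0 \<in> orbit" by (simp add: orbit_def)
  then have e0: "{x, y} \<in> E" using d0 mem_E_iff by simp
  have covered_X: "covered e" if "e \<in> X" for e
  proof -
    have "(face_linked X)\<^sup>*\<^sup>* {x, y} e" using face_connected E_subset e0 that by blast
    then show ?thesis
    proof (induction rule: rtranclp_induct)
      case base
      show ?case using e0 by (simp add: covered_def)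
    next
      case (step e e')
      then show ?case using covered_step by blast
    qed
  qed
  have "finite (E \<union> Pow ({-N..N} \<times> {-N..N}))" using finite_E by simp
  then have "\<not> X \<subseteq> E \<union> Pow ({-N..N} \<times> {-N..N})" using infinite_edges finite_subset by blast
  then obtain e w where "e \<in> X" "e \<notin> E" "w \<in> e" "w \<notin> {-N..N} \<times> {-N..N}" by blast
  moreover from this have "N < \<bar>fst w\<bar> \<or> N < \<bar>snd w\<bar>" by (cases w) auto
  ultimately show False using covered_X not_enclosed_outside_box unfolding covered_def by blast
qed

end

context interface
begin

theorem infinite_cluster_at_boundary:
  "\<exists>x y. x \<in> component \<and> grid_adj x y \<and> {x, y} \<in> X \<and> infinite {w. (same_adj \<omega>)\<^sup>*\<^sup>* x w}"
proof -
  obtain d where d: "boundary_dart component d" using boundary_dart_exists by blast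
  have "infinite {w. (same_adj \<omega>)\<^sup>*\<^sup>* (fst d) w}"
  proof
    assume "finite {w. (same_adj \<omega>)\<^sup>*\<^sup>* (fst d) w}"
    then interpret finite_boundary_walk \<omega> X v\<^sub>0 d using d by unfold_locales
    show False by (rule inconsistent)
  qed
  moreover have "{fst d, snd d} \<in> X" using d boundary_dart_edge[of "fst d" "snd d"] by simp
  ultimately show ?thesis using d unfolding boundary_dart_def by blast
qed

end

section \<open>Geometry of the dual lattices\<close>

lemma dist_dpt: "dist (dpt u) (dpt v) = sqrt (real_of_int ((fst u - fst v) * (fst u - fst v) + (snd u - snd v) * (snd u - snd v)))"
  unfolding dpt_def dist_Pair_Pair dist_real_def by (simp add: power2_eq_square algebra_simps)

definition dual_hedge :: "int \<Rightarrow> int \<Rightarrow> vertex set" where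
  "dual_hedge c d = {(c, d), (c + 2, d)}"

definition dual_vedge :: "int \<Rightarrow> int \<Rightarrow> vertex set" where
  "dual_vedge c d = {(c, d), (c, d + 2)}"

lemma dist_dpt_eq_2: "dist (dpt p) (dpt q) = 2 \<longleftrightarrow>
   (\<bar>fst p - fst q\<bar> = 2 \<and> snd p = snd q) \<or> (fst p = fst q \<and> \<bar>snd p - snd q\<bar> = 2)"
proof -
  have "dist (dpt p) (dpt q) = 2 \<longleftrightarrow> sqrt (real_of_int ((fst p - fst q) * (fst p - fst q) + (snd p - snd q) * (snd p - snd q))) = real 2"
    by (simp only: dist_dpt) simp
  also have "\<dots> \<longleftrightarrow> (fst p - fst q) * (fst p - fst q) + (snd p - snd q) * (snd p - snd q) = int (2 * 2)"
    by (rule sqrt_of_int_eq_nat)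
  also have "\<dots> \<longleftrightarrow> (\<bar>fst p - fst q\<bar> = 2 \<and> snd p = snd q) \<or> (fst p = fst q \<and> \<bar>snd p - snd q\<bar> = 2)"
    using int_sum_squares_eq_4[of "fst p - fst q" "snd p - snd q"] by auto
  finally show ?thesis .
qed

lemma dual_edge_shape:
  assumes "f = {p, q}" "dist (dpt p) (dpt q) = 2" "even (fst p + snd p)"
  shows "\<exists>c d. even (c + d) \<and> (f = dual_hedge c d \<or> f = dual_vedge c d)"
proof -
  obtain a b where p: "p = (a, b)" by (cases p)
  obtain a' b' where q: "q = (a', b')" by (cases q)
  have e: "even (a + b)" using assms p by simp
  have h: "(\<bar>a - a'\<bar> = 2 \<and> b = b') \<or> (a = a' \<and> \<bar>b - b'\<bar> = 2)"
    using assms(2) unfolding dist_dpt_eq_2 p q by simp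
  have "(a' = a + 2 \<and> b' = b) \<or> (a' = a - 2 \<and> b' = b) \<or> (a' = a \<and> b' = b + 2) \<or> (a' = a \<and> b' = b - 2)"
    using h by linarith
  then consider "a' = a + 2" "b' = b" | "a' = a - 2" "b' = b" | "a' = a" "b' = b + 2" | "a' = a" "b' = b - 2"
    by blast
  then show ?thesis
  proof cases
    case 1
    have "f = dual_hedge a b" using 1 assms(1) p q by (simp add: dual_hedge_def)
    then show ?thesis using e by blast
  next
    case 2
    have "f = dual_hedge (a - 2) b" using 2 assms(1) p q by (simp add: dual_hedge_def insert_commute)
    moreover have "even ((a - 2) + b)" using e by simp
    ultimately show ?thesis by blast
  next
    case 3
    have "f = dual_vedge a b" using 3 assms(1) p q by (simp add: dual_vedge_def)
    then show ?thesis using e by blast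
  next
    case 4
    have "f = dual_vedge a (b - 2)" using 4 assms(1) p q by (simp add: dual_vedge_def insert_commute)
    moreover have "even (a + (b - 2))" using e by simp
    ultimately show ?thesis by blast
  qed
qed

lemma dual_edge_iff: "dual_edge f \<longleftrightarrow> (\<exists>c d. even (c + d) \<and> (f = dual_hedge c d \<or> f = dual_vedge c d))"
proof
  assume "dual_edge f"
  then show "\<exists>c d. even (c + d) \<and> (f = dual_hedge c d \<or> f = dual_vedge c d)"
    unfolding dual_edge_def L1_edge_def L2_edge_def L1_vert_def L2_vert_def
  proof (elim disjE exE conjE)
    fix p q assume "f = {p, q}" "even (fst p)" "even (snd p)" "dist (dpt p) (dpt q) = 2"
    then show ?thesis by (intro dual_edge_shape) auto
  next
    fix p q assume "f = {p, q}" "odd (fst p)" "odd (snd p)" "dist (dpt p) (dpt q) = 2"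
    then show ?thesis by (intro dual_edge_shape) auto
  qed
next
  assume "\<exists>c d. even (c + d) \<and> (f = dual_hedge c d \<or> f = dual_vedge c d)"
  then obtain c d where cd: "even (c + d)" "f = dual_hedge c d \<or> f = dual_vedge c d" by blast
  have pd: "dual_edge f" if "f = {p, q}" "dist (dpt p) (dpt q) = 2" "even (fst p + snd p)" "even (fst p - fst q)" "even (snd p - snd q)" for p q
  proof (cases "even (fst p)")
    case True
    then have "L1_edge f" unfolding L1_edge_def L1_vert_def using that
      by (intro exI[of _ p] exI[of _ q]) (use that in auto)
    then show ?thesis by (simp add: dual_edge_def)
  next
    case False
    then have "L2_edge f" unfolding L2_edge_def L2_vert_def using that
      by (intro exI[of _ p] exI[of _ q]) (use that in auto)
    then show ?thesis by (simp add: dual_edge_def)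
  qed
  from cd(2) show "dual_edge f"
  proof
    assume "f = dual_hedge c d"
    then show ?thesis by (intro pd[of "(c, d)" "(c + 2, d)"]) (use cd(1) in \<open>auto simp: dual_hedge_def dist_dpt_eq_2\<close>)
  next
    assume "f = dual_vedge c d"
    then show ?thesis by (intro pd[of "(c, d)" "(c, d + 2)"]) (use cd(1) in \<open>auto simp: dual_vedge_def dist_dpt_eq_2\<close>)
  qed
qed

lemma dual_hedge_eq_iff: "dual_hedge c d = dual_hedge c' d' \<longleftrightarrow> c = c' \<and> d = d'"
  by (auto simp: dual_hedge_def doubleton_eq_iff)

lemma dual_vedge_eq_iff: "dual_vedge c d = dual_vedge c' d' \<longleftrightarrow> c = c' \<and> d = d'"
  by (auto simp: dual_vedge_def doubleton_eq_iff)

lemma dual_hedge_neq_dual_vedge: "dual_hedge c d \<noteq> dual_vedge c' d'"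
  by (auto simp: dual_hedge_def dual_vedge_def doubleton_eq_iff)

lemma closed_segment_pair_iff: "z \<in> closed_segment (x1, y1) (x2, y2) \<longleftrightarrow>
   (\<exists>u. 0 \<le> u \<and> u \<le> 1 \<and> fst z = (1 - u) * x1 + u * x2 \<and> snd z = (1 - u) * y1 + u * y2)"
  for x1 y1 x2 y2 :: real
  unfolding closed_segment_def by (cases z) (auto simp: prod_eq_iff)

lemma closed_segment_real_iff: "t \<in> closed_segment x1 x2 \<longleftrightarrow> (\<exists>u. 0 \<le> u \<and> u \<le> 1 \<and> t = (1 - u) * x1 + u * x2)"
  for x1 x2 t :: real
  unfolding closed_segment_def by auto

lemma closed_segment_horizontal: fixes x1 x2 y :: real assumes "x1 \<le> x2"
  shows "closed_segment (x1, y) (x2, y) = {z. snd z = y \<and> x1 \<le> fst z \<and> fst z \<le> x2}"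
proof -
  have "z \<in> closed_segment (x1, y) (x2, y) \<longleftrightarrow> snd z = y \<and> fst z \<in> closed_segment x1 x2" for z
    unfolding closed_segment_pair_iff closed_segment_real_iff by (auto simp: algebra_simps)
  then show ?thesis using closed_segment_eq_real_ivl1[OF assms] by auto
qed

lemma closed_segment_vertical: fixes y1 y2 x :: real assumes "y1 \<le> y2"
  shows "closed_segment (x, y1) (x, y2) = {z. fst z = x \<and> y1 \<le> snd z \<and> snd z \<le> y2}"
proof -
  have "z \<in> closed_segment (x, y1) (x, y2) \<longleftrightarrow> fst z = x \<and> snd z \<in> closed_segment y1 y2" for z
    unfolding closed_segment_pair_iff closed_segment_real_iff by (auto simp: algebra_simps)
  then show ?thesis using closed_segment_eq_real_ivl1[OF assms] by auto
qed

lemma gseg_hedge: "gseg (hedge a b) = {z. snd z = of_int b \<and> of_int a \<le> fst z \<and> fst z \<le> of_int a + 1}"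
  unfolding gseg_def hedge_def gpt_def by (simp add: segment_convex_hull[symmetric] closed_segment_horizontal)
lemma gseg_vedge: "gseg (vedge a b) = {z. fst z = of_int a \<and> of_int b \<le> snd z \<and> snd z \<le> of_int b + 1}"
  unfolding gseg_def vedge_def gpt_def by (simp add: segment_convex_hull[symmetric] closed_segment_vertical)
lemma dseg_dual_hedge: "dseg (dual_hedge c d) = {z. snd z = of_int d + 1/2 \<and> of_int c - 1/2 \<le> fst z \<and> fst z \<le> of_int c + 3/2}"
  unfolding dseg_def dual_hedge_def dpt_def by (auto simp: segment_convex_hull[symmetric] closed_segment_horizontal)
lemma dseg_dual_vedge: "dseg (dual_vedge c d) = {z. fst z = of_int c - 1/2 \<and> of_int d + 1/2 \<le> snd z \<and> snd z \<le> of_int d + 5/2}"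
  unfolding dseg_def dual_vedge_def dpt_def by (auto simp: segment_convex_hull[symmetric] closed_segment_vertical)

lemma int_le_if_of_int_less_succ: "real_of_int a < real_of_int c + 1 \<Longrightarrow> a \<le> c"
proof (rule ccontr)
  assume "real_of_int a < real_of_int c + 1" "\<not> a \<le> c"
  then have "c + 1 \<le> a" by simp
  then have "real_of_int (c + 1) \<le> real_of_int a" by (simp only: of_int_le_iff)
  then show False using \<open>real_of_int a < real_of_int c + 1\<close> by simp
qed

lemma of_int_neq_half_int: "real_of_int a \<noteq> real_of_int c + 1/2"
proof
  assume "real_of_int a = real_of_int c + 1/2"
  then have "real_of_int (2 * a) = real_of_int (2 * c + 1)" by simp
  then have "2 * a = 2 * c + 1" by (simp only: of_int_eq_iff)
  then show False by presburger
qed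

text \<open>The dual edges crossing \<open>vedge a b\<close> and \<open>hedge a b\<close>: a grid edge is a side of exactly
  one black face, and the crossing dual edge is the one through that face's centre perpendicular to it.\<close>

definition vcross :: "int \<Rightarrow> int \<Rightarrow> vertex set" where
  "vcross a b = (if even (a + b) then dual_hedge a b else dual_hedge (a - 1) b)"
definition hcross :: "int \<Rightarrow> int \<Rightarrow> vertex set" where
  "hcross a b = (if even (a + b) then dual_vedge (a + 1) (b - 1) else dual_vedge (a + 1) (b - 2))"

lemma hedge_disjoint_dual_hedge: "gseg (hedge a b) \<inter> dseg (dual_hedge c d) = {}"
  unfolding gseg_hedge dseg_dual_hedge using of_int_neq_half_int by auto

lemma vedge_disjoint_dual_vedge: "gseg (vedge a b) \<inter> dseg (dual_vedge c d) = {}"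
  unfolding gseg_vedge dseg_dual_vedge using of_int_neq_half_int[of a "c - 1"] by auto

lemma hedge_meets_dual_vedge_iff: "gseg (hedge a b) \<inter> dseg (dual_vedge c d) \<noteq> {} \<longleftrightarrow> c = a + 1 \<and> (b = d + 1 \<or> b = d + 2)"
proof
  assume "gseg (hedge a b) \<inter> dseg (dual_vedge c d) \<noteq> {}"
  then obtain z :: "real \<times> real" where z: "snd z = of_int b" "of_int a \<le> fst z" "fst z \<le> of_int a + 1"
     "fst z = of_int c - 1/2" "of_int d + 1/2 \<le> snd z" "snd z \<le> of_int d + 5/2"
    unfolding gseg_hedge dseg_dual_vedge by auto
  have "a + 1 \<le> c" using int_le_if_of_int_less_succ[of "a + 1" c] z by simp
  moreover have "c \<le> a + 1" using int_le_if_of_int_less_succ[of c "a + 1"] z by simp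
  moreover have "d + 1 \<le> b" using int_le_if_of_int_less_succ[of "d + 1" b] z by simp
  moreover have "b \<le> d + 2" using int_le_if_of_int_less_succ[of b "d + 2"] z by simp
  ultimately show "c = a + 1 \<and> (b = d + 1 \<or> b = d + 2)" by auto
next
  assume h: "c = a + 1 \<and> (b = d + 1 \<or> b = d + 2)"
  then have "(of_int a + 1/2, of_int b) \<in> gseg (hedge a b) \<inter> dseg (dual_vedge c d)"
    unfolding gseg_hedge dseg_dual_vedge by auto
  then show "gseg (hedge a b) \<inter> dseg (dual_vedge c d) \<noteq> {}" by blast
qed

lemma vedge_meets_dual_hedge_iff: "gseg (vedge a b) \<inter> dseg (dual_hedge c d) \<noteq> {} \<longleftrightarrow> d = b \<and> (a = c \<or> a = c + 1)"
proof
  assume "gseg (vedge a b) \<inter> dseg (dual_hedge c d) \<noteq> {}"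
  then obtain z where zz: "z \<in> gseg (vedge a b) \<inter> dseg (dual_hedge c d)" by blast
  then have z: "fst z = of_int a" "of_int b \<le> snd z" "snd z \<le> of_int b + 1"
     "snd z = of_int d + 1/2" "of_int c - 1/2 \<le> fst z" "fst z \<le> of_int c + 3/2"
    unfolding gseg_vedge dseg_dual_hedge by auto
  have "c \<le> a" using int_le_if_of_int_less_succ[of c a] z by simp
  moreover have "a \<le> c + 1" using int_le_if_of_int_less_succ[of a "c + 1"] z by simp
  moreover have "b \<le> d" using int_le_if_of_int_less_succ[of b d] z by simp
  moreover have "d \<le> b" using int_le_if_of_int_less_succ[of d b] z by simp
  ultimately show "d = b \<and> (a = c \<or> a = c + 1)" by auto
next
  assume h: "d = b \<and> (a = c \<or> a = c + 1)"
  then have "(of_int a, of_int b + 1/2) \<in> gseg (vedge a b) \<inter> dseg (dual_hedge c d)"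
    unfolding gseg_vedge dseg_dual_hedge by auto
  then show "gseg (vedge a b) \<inter> dseg (dual_hedge c d) \<noteq> {}" by blast
qed

lemma hedge_meets_dual_edge_iff: assumes "dual_edge f" shows "gseg (hedge a b) \<inter> dseg f \<noteq> {} \<longleftrightarrow> f = hcross a b"
proof -
  obtain c d where cd: "even (c + d)" "f = dual_hedge c d \<or> f = dual_vedge c d" using assms dual_edge_iff by blast
  from cd(2) show ?thesis
  proof
    assume f: "f = dual_hedge c d"
    then show ?thesis using hedge_disjoint_dual_hedge dual_hedge_neq_dual_vedge by (auto simp: hcross_def)
  next
    assume f: "f = dual_vedge c d"
    show ?thesis unfolding f hedge_meets_dual_vedge_iff hcross_def using cd(1) by (auto simp: dual_vedge_eq_iff)
  qed
qed

lemma vedge_meets_dual_edge_iff: assumes "dual_edge f" shows "gseg (vedge a b) \<inter> dseg f \<noteq> {} \<longleftrightarrow> f = vcross a b"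
proof -
  obtain c d where cd: "even (c + d)" "f = dual_hedge c d \<or> f = dual_vedge c d" using assms dual_edge_iff by blast
  from cd(2) show ?thesis
  proof
    assume f: "f = dual_vedge c d"
    then show ?thesis using vedge_disjoint_dual_vedge dual_hedge_neq_dual_vedge by (auto simp: vcross_def) (metis dual_hedge_neq_dual_vedge)+
  next
    assume f: "f = dual_hedge c d"
    show ?thesis unfolding f vedge_meets_dual_hedge_iff vcross_def using cd(1) by (auto simp: dual_hedge_eq_iff)
  qed
qed

text \<open>The two configurations of a black face to which \<open>phi\<close> assigns a present dual edge.\<close>

definition hsplit :: "(vertex \<Rightarrow> bool) \<Rightarrow> int \<Rightarrow> int \<Rightarrow> bool" where
  "hsplit \<omega> m n \<longleftrightarrow> \<omega> (m, n + 1) = \<omega> (m + 1, n + 1) \<and> \<omega> (m, n) = \<omega> (m + 1, n) \<and> \<omega> (m, n + 1) \<noteq> \<omega> (m, n)"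

definition vsplit :: "(vertex \<Rightarrow> bool) \<Rightarrow> int \<Rightarrow> int \<Rightarrow> bool" where
  "vsplit \<omega> m n \<longleftrightarrow> \<omega> (m, n) = \<omega> (m, n + 1) \<and> \<omega> (m + 1, n) = \<omega> (m + 1, n + 1) \<and> \<omega> (m, n) \<noteq> \<omega> (m + 1, n)"

lemma midpoint_pair: "midpoint (x1::real, y1::real) (x2, y2) = ((x1 + x2)/2, (y1 + y2)/2)"
  unfolding midpoint_def by simp

lemma dual_edge_dual_hedge: "dual_edge (dual_hedge c d) \<longleftrightarrow> even (c + d)"
  unfolding dual_edge_iff using dual_hedge_eq_iff dual_hedge_neq_dual_vedge by metis
lemma dual_edge_dual_vedge: "dual_edge (dual_vedge c d) \<longleftrightarrow> even (c + d)"
  unfolding dual_edge_iff using dual_vedge_eq_iff dual_hedge_neq_dual_vedge by metis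

lemma phi_dual_hedge: "phi \<omega> (dual_hedge c d) \<longleftrightarrow> even (c + d) \<and> hsplit \<omega> c d"
proof -
  have mid: "midpoint (dpt p) (dpt q) = (of_int c + 1/2, of_int d + 1/2)" if "dual_hedge c d = {p, q}" for p q
  proof -
    have "(p = (c, d) \<and> q = (c + 2, d)) \<or> (p = (c + 2, d) \<and> q = (c, d))" using that by (auto simp: dual_hedge_def doubleton_eq_iff)
    then show ?thesis by (auto simp: dpt_def midpoint_pair)
  qed
  have sq: "snd p = snd q \<and> fst p \<noteq> fst q" if "dual_hedge c d = {p, q}" for p q
    using that by (auto simp: dual_hedge_def doubleton_eq_iff)
  show ?thesis
  proof
    assume "phi \<omega> (dual_hedge c d)"
    then obtain p q m n where h: "dual_hedge c d = {p, q}" "black m n" "midpoint (dpt p) (dpt q) = (of_int m + 1/2, of_int n + 1/2)"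
      "(snd p = snd q \<and> \<omega> (m, n + 1) = \<omega> (m + 1, n + 1) \<and> \<omega> (m, n) = \<omega> (m + 1, n) \<and> \<omega> (m, n + 1) \<noteq> \<omega> (m, n)) \<or>
       (fst p = fst q \<and> \<omega> (m, n) = \<omega> (m, n + 1) \<and> \<omega> (m + 1, n) = \<omega> (m + 1, n + 1) \<and> \<omega> (m, n) \<noteq> \<omega> (m + 1, n))"
      and de: "dual_edge (dual_hedge c d)"
      unfolding phi_def by blast
    have "m = c" "n = d" using h(3) mid[OF h(1)] by auto
    then show "even (c + d) \<and> hsplit \<omega> c d" using h(4) sq[OF h(1)] de dual_edge_dual_hedge by (auto simp: hsplit_def)
  next
    assume a: "even (c + d) \<and> hsplit \<omega> c d"
    show "phi \<omega> (dual_hedge c d)" unfolding phi_def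
    proof (intro conjI exI)
      show "dual_edge (dual_hedge c d)" using a dual_edge_dual_hedge by simp
      show "dual_hedge c d = {(c, d), (c + 2, d)}" by (simp add: dual_hedge_def)
      show "black c d" using a by (simp add: black_def)
      show "midpoint (dpt (c, d)) (dpt (c + 2, d)) = (of_int c + 1/2, of_int d + 1/2)" by (rule mid) (simp add: dual_hedge_def)
      show "(snd (c, d) = snd (c + 2, d) \<and> \<omega> (c, d + 1) = \<omega> (c + 1, d + 1) \<and> \<omega> (c, d) = \<omega> (c + 1, d) \<and> \<omega> (c, d + 1) \<noteq> \<omega> (c, d)) \<or>
       (fst (c, d) = fst (c + 2, d) \<and> \<omega> (c, d) = \<omega> (c, d + 1) \<and> \<omega> (c + 1, d) = \<omega> (c + 1, d + 1) \<and> \<omega> (c, d) \<noteq> \<omega> (c + 1, d))"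
        using a unfolding hsplit_def by (metis snd_conv)
    qed
  qed
qed

lemma phi_dual_vedge: "phi \<omega> (dual_vedge c d) \<longleftrightarrow> even (c + d) \<and> vsplit \<omega> (c - 1) (d + 1)"
proof -
  have mid: "midpoint (dpt p) (dpt q) = (of_int (c - 1) + 1/2, of_int (d + 1) + 1/2)" if "dual_vedge c d = {p, q}" for p q
  proof -
    have "(p = (c, d) \<and> q = (c, d + 2)) \<or> (p = (c, d + 2) \<and> q = (c, d))" using that by (auto simp: dual_vedge_def doubleton_eq_iff)
    then show ?thesis by (auto simp: dpt_def midpoint_pair)
  qed
  have sq: "fst p = fst q \<and> snd p \<noteq> snd q" if "dual_vedge c d = {p, q}" for p q
    using that by (auto simp: dual_vedge_def doubleton_eq_iff)
  show ?thesis
  proof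
    assume "phi \<omega> (dual_vedge c d)"
    then obtain p q m n where h: "dual_vedge c d = {p, q}" "black m n" "midpoint (dpt p) (dpt q) = (of_int m + 1/2, of_int n + 1/2)"
      "(snd p = snd q \<and> \<omega> (m, n + 1) = \<omega> (m + 1, n + 1) \<and> \<omega> (m, n) = \<omega> (m + 1, n) \<and> \<omega> (m, n + 1) \<noteq> \<omega> (m, n)) \<or>
       (fst p = fst q \<and> \<omega> (m, n) = \<omega> (m, n + 1) \<and> \<omega> (m + 1, n) = \<omega> (m + 1, n + 1) \<and> \<omega> (m, n) \<noteq> \<omega> (m + 1, n))"
      and de: "dual_edge (dual_vedge c d)"
      unfolding phi_def by blast
    have "real_of_int m + 1/2 = real_of_int (c - 1) + 1/2" "real_of_int n + 1/2 = real_of_int (d + 1) + 1/2"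
      using h(3) mid[OF h(1)] by auto
    then have "m = c - 1" "n = d + 1" by simp_all
    then show "even (c + d) \<and> vsplit \<omega> (c - 1) (d + 1)" using h(4) sq[OF h(1)] de dual_edge_dual_vedge by (auto simp: vsplit_def)
  next
    assume a: "even (c + d) \<and> vsplit \<omega> (c - 1) (d + 1)"
    show "phi \<omega> (dual_vedge c d)" unfolding phi_def
    proof (intro conjI exI)
      show "dual_edge (dual_vedge c d)" using a dual_edge_dual_vedge by simp
      show "dual_vedge c d = {(c, d), (c, d + 2)}" by (simp add: dual_vedge_def)
      show "black (c - 1) (d + 1)" using a by (simp add: black_def)
      show "midpoint (dpt (c, d)) (dpt (c, d + 2)) = (of_int (c - 1) + 1/2, of_int (d + 1) + 1/2)" by (rule mid) (simp add: dual_vedge_def)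
      show "(snd (c, d) = snd (c, d + 2) \<and> \<omega> (c - 1, d + 1 + 1) = \<omega> (c - 1 + 1, d + 1 + 1) \<and> \<omega> (c - 1, d + 1) = \<omega> (c - 1 + 1, d + 1) \<and> \<omega> (c - 1, d + 1 + 1) \<noteq> \<omega> (c - 1, d + 1)) \<or>
       (fst (c, d) = fst (c, d + 2) \<and> \<omega> (c - 1, d + 1) = \<omega> (c - 1, d + 1 + 1) \<and> \<omega> (c - 1 + 1, d + 1) = \<omega> (c - 1 + 1, d + 1 + 1) \<and> \<omega> (c - 1, d + 1) \<noteq> \<omega> (c - 1 + 1, d + 1))"
        using a unfolding vsplit_def by (metis fst_conv)
    qed
  qed
qed

lemma Omega_splits:
  assumes "\<omega> \<in> Omega" "black m n"
  shows "hsplit \<omega> m n \<longleftrightarrow> \<omega> (m, n) \<noteq> \<omega> (m, n + 1)" "hsplit \<omega> m n \<longleftrightarrow> \<omega> (m + 1, n) \<noteq> \<omega> (m + 1, n + 1)"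
        "vsplit \<omega> m n \<longleftrightarrow> \<omega> (m, n) \<noteq> \<omega> (m + 1, n)" "vsplit \<omega> m n \<longleftrightarrow> \<omega> (m, n + 1) \<noteq> \<omega> (m + 1, n + 1)"
  using assms unfolding Omega_def hsplit_def vsplit_def by auto

lemma phi_vcross: assumes "\<omega> \<in> Omega" shows "phi \<omega> (vcross a b) \<longleftrightarrow> \<omega> (a, b) \<noteq> \<omega> (a, b + 1)"
proof (cases "even (a + b)")
  case True
  then show ?thesis using Omega_splits(1)[OF assms, of a b] by (simp add: vcross_def phi_dual_hedge black_def)
next
  case False
  then have e: "even (a - 1 + b)" by simp
  show ?thesis using False e Omega_splits(2)[OF assms, of "a - 1" b] by (simp add: vcross_def phi_dual_hedge black_def)
qed

lemma phi_hcross: assumes "\<omega> \<in> Omega" shows "phi \<omega> (hcross a b) \<longleftrightarrow> \<omega> (a, b) \<noteq> \<omega> (a + 1, b)"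
proof (cases "even (a + b)")
  case True
  then have e: "even (a + 1 + (b - 1))" by simp
  show ?thesis using True e Omega_splits(3)[OF assms, of a b] by (simp add: hcross_def phi_dual_vedge black_def)
next
  case False
  then have e: "even (a + 1 + (b - 2))" "even (a + (b - 1))" by simp_all
  show ?thesis using False e Omega_splits(4)[OF assms, of a "b - 1"] by (simp add: hcross_def phi_dual_vedge black_def)
qed

definition crossed :: "vertex set \<Rightarrow> vertex set set" where
  "crossed f = {hedge a b |a b. hcross a b = f} \<union> {vedge a b |a b. vcross a b = f}"

lemma crossed_unique: "s \<in> crossed f \<Longrightarrow> s \<in> crossed f' \<Longrightarrow> f = f'"
  unfolding crossed_def using hedge_eq_iff vedge_eq_iff hedge_neq_vedge by auto (metis hedge_neq_vedge)+

lemma vcross_dual_hedge_face: "vcross a b = dual_hedge c d \<Longrightarrow> vedge a b \<in> face_sides c d"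
  unfolding vcross_def face_sides_def by (auto simp: dual_hedge_eq_iff split: if_splits)
lemma hcross_dual_vedge_face: "hcross a b = dual_vedge c d \<Longrightarrow> hedge a b \<in> face_sides (c - 1) (d + 1)"
  unfolding hcross_def face_sides_def by (auto simp: dual_vedge_eq_iff split: if_splits)
lemma vcross_neq_dual_vedge: "vcross a b \<noteq> dual_vedge c d" unfolding vcross_def using dual_hedge_neq_dual_vedge by auto
lemma hcross_neq_dual_hedge: "hcross a b \<noteq> dual_hedge c d" unfolding hcross_def using dual_hedge_neq_dual_vedge by (auto) (metis dual_hedge_neq_dual_vedge)+

lemma crossed_in_face: "dual_edge f \<Longrightarrow> \<exists>m n. crossed f \<subseteq> face_sides m n"
proof -
  assume "dual_edge f"
  then obtain c d where cd: "f = dual_hedge c d \<or> f = dual_vedge c d" using dual_edge_iff by blast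
  then show ?thesis
  proof
    assume f: "f = dual_hedge c d"
    have "crossed f \<subseteq> face_sides c d" unfolding crossed_def f using vcross_dual_hedge_face hcross_neq_dual_hedge by auto
    then show ?thesis by blast
  next
    assume f: "f = dual_vedge c d"
    have "crossed f \<subseteq> face_sides (c - 1) (d + 1)" unfolding crossed_def f using hcross_dual_vedge_face vcross_neq_dual_vedge by auto
    then show ?thesis by blast
  qed
qed

lemma crossed_at_white_face: assumes "dual_edge f" "p \<in> f" shows "\<exists>s\<in>crossed f. s \<in> face_sides (fst p - 1) (snd p)"
proof -
  obtain c d where cd: "even (c + d)" "f = dual_hedge c d \<or> f = dual_vedge c d" using assms(1) dual_edge_iff by blast
  from cd(2) show ?thesis
  proof
    assume f: "f = dual_hedge c d"
    then have "p = (c, d) \<or> p = (c + 2, d)" using assms(2) by (auto simp: dual_hedge_def)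
    then show ?thesis
    proof
      assume p: "p = (c, d)"
      have "vedge c d \<in> crossed f" unfolding crossed_def f vcross_def using cd(1) by auto
      moreover have "vedge c d \<in> face_sides (fst p - 1) (snd p)" using p by (simp add: face_sides_def)
      ultimately show ?thesis by blast
    next
      assume p: "p = (c + 2, d)"
      have "vcross (c + 1) d = dual_hedge c d" unfolding vcross_def using cd(1) by auto
      then have "vedge (c + 1) d \<in> crossed f" unfolding crossed_def f by auto
      moreover have "vedge (c + 1) d \<in> face_sides (fst p - 1) (snd p)" using p by (simp add: face_sides_def add.commute)
      ultimately show ?thesis by blast
    qed
  next
    assume f: "f = dual_vedge c d"
    then have "p = (c, d) \<or> p = (c, d + 2)" using assms(2) by (auto simp: dual_vedge_def)
    then show ?thesis
    proof
      assume p: "p = (c, d)"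
      have "hcross (c - 1) (d + 1) = dual_vedge c d" unfolding hcross_def using cd(1) by auto
      then have "hedge (c - 1) (d + 1) \<in> crossed f" unfolding crossed_def f by auto
      moreover have "hedge (c - 1) (d + 1) \<in> face_sides (fst p - 1) (snd p)" using p by (simp add: face_sides_def)
      ultimately show ?thesis by blast
    next
      assume p: "p = (c, d + 2)"
      have "hcross (c - 1) (d + 2) = dual_vedge c d" unfolding hcross_def using cd(1) by auto
      then have "hedge (c - 1) (d + 2) \<in> crossed f" unfolding crossed_def f by auto
      moreover have "hedge (c - 1) (d + 2) \<in> face_sides (fst p - 1) (snd p)" using p by (simp add: face_sides_def)
      ultimately show ?thesis by blast
    qed
  qed
qed

lemma face_sides_crossed: "s \<in> face_sides m n \<Longrightarrow> s \<in> crossed (hcross m n) \<or> s \<in> crossed (hcross m (n + 1)) \<or> s \<in> crossed (vcross m n) \<or> s \<in> crossed (vcross (m + 1) n)"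
  unfolding face_sides_def crossed_def by auto

lemma black_face_crossings: "even (m + n) \<Longrightarrow> hcross m n = dual_vedge (m + 1) (n - 1) \<and> hcross m (n + 1) = dual_vedge (m + 1) (n - 1) \<and> vcross m n = dual_hedge m n \<and> vcross (m + 1) n = dual_hedge m n"
  unfolding hcross_def vcross_def by auto

lemma white_face_crossings: "odd (m + n) \<Longrightarrow> (m + 1, n) \<in> hcross m n \<and> (m + 1, n) \<in> hcross m (n + 1) \<and> (m + 1, n) \<in> vcross m n \<and> (m + 1, n) \<in> vcross (m + 1) n"
  unfolding hcross_def vcross_def dual_hedge_def dual_vedge_def by auto

lemma half_int_dist_ge: "1/2 \<le> \<bar>real_of_int k - 1/2\<bar>"
proof -
  have "k \<ge> 1 \<or> k \<le> 0" by linarith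
  then have "real_of_int k \<ge> 1 \<or> real_of_int k \<le> 0" by (metis of_int_1_le_iff of_int_le_0_iff)
  then show ?thesis by linarith
qed

lemma dist_vertex_dual_segment_ge:
  assumes "dual_edge f" "z \<in> dseg f"
  shows "1/2 \<le> dist (gpt x) z"
proof -
  obtain c d where "f = dual_hedge c d \<or> f = dual_vedge c d" using assms(1) dual_edge_iff by blast
  then show ?thesis
  proof
    assume "f = dual_hedge c d"
    then have "snd z = of_int d + 1/2" using assms(2) dseg_dual_hedge by auto
    then have "dist (snd (gpt x)) (snd z) = \<bar>real_of_int (snd x - d) - 1/2\<bar>"
      by (simp add: gpt_def dist_real_def algebra_simps)
    then show ?thesis using half_int_dist_ge[of "snd x - d"] dist_snd_le[of "gpt x" z] by linarith
  next
    assume "f = dual_vedge c d"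
    then have "fst z = of_int c - 1/2" using assms(2) dseg_dual_vedge by auto
    then have "dist (fst (gpt x)) (fst z) = \<bar>real_of_int (c - fst x) - 1/2\<bar>"
      by (simp add: gpt_def dist_real_def algebra_simps abs_minus_commute)
    then show ?thesis using half_int_dist_ge[of "c - fst x"] dist_fst_le[of "gpt x" z] by linarith
  qed
qed

lemma infdist_crossed_endpoint:
  assumes "grid_adj x y" "dual_edge f" "gseg {x, y} \<inter> dseg f \<noteq> {}"
  shows "infdist (gpt x) (dseg f) = 1/2"
proof (rule antisym)
  obtain z where z: "z \<in> gseg {x, y}" "z \<in> dseg f" using assms(3) by blast
  have "dist (gpt x) (gpt y) = 1" using G_edge_iff_grid_adj[of x y] assms(1)
    unfolding G_edge_def by (auto simp: doubleton_eq_iff dist_commute)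
  moreover have "z \<in> closed_segment (gpt x) (gpt y)"
    using z(1) unfolding gseg_def by (simp add: segment_convex_hull)
  then have "dist (gpt x) (gpt y) = dist (gpt x) z + dist z (gpt y)"
    using between between_mem_segment by blast
  moreover have "1/2 \<le> dist (gpt y) z" using dist_vertex_dual_segment_ge[OF assms(2) z(2)] .
  ultimately have "dist (gpt x) z \<le> 1/2" by (simp add: dist_commute)
  then show "infdist (gpt x) (dseg f) \<le> 1/2" using infdist_le2[OF z(2)] by blast
next
  have "dseg f \<noteq> {}" using assms(3) by blast
  then show "1/2 \<le> infdist (gpt x) (dseg f)" unfolding infdist_notempty[OF \<open>dseg f \<noteq> {}\<close>]
    by (rule cINF_greatest) (rule dist_vertex_dual_segment_ge[OF assms(2)])
qed

section \<open>Edges crossed by a contour\<close>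

definition crossed_by :: "vertex set set \<Rightarrow> vertex set set" where
  "crossed_by C = {e. \<exists>u v. e = {u, v} \<and> grid_adj u v \<and> (\<exists>f\<in>C. gseg e \<inter> dseg f \<noteq> {})}"

lemma GC_adj_eq_avoiding_adj: "GC_adj C = avoiding_adj (crossed_by C)"
  unfolding GC_adj_def avoiding_adj_def crossed_by_def G_edge_iff_grid_adj by (intro ext) blast

locale contour =
  fixes \<omega> :: "vertex \<Rightarrow> bool" and C :: "vertex set set"
  assumes in_Omega: "\<omega> \<in> Omega" and is_contour: "is_contour \<omega> C"
begin

abbreviation X :: "vertex set set" where
  "X \<equiv> crossed_by C"

lemma contour_eq: obtains g where "phi \<omega> g" "C = {f. (dual_adj \<omega>)\<^sup>*\<^sup>* g f}"
  using is_contour unfolding is_contour_def by blast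

lemma contour_reachable: "f \<in> C \<Longrightarrow> (dual_adj \<omega>)\<^sup>*\<^sup>* f f' \<Longrightarrow> f' \<in> C"
  using contour_eq by (metis mem_Collect_eq rtranclp_trans)

lemma contour_connected:
  assumes "f \<in> C" "f' \<in> C"
  shows "(dual_adj \<omega>)\<^sup>*\<^sup>* f f'"
proof -
  obtain g where C: "C = {f. (dual_adj \<omega>)\<^sup>*\<^sup>* g f}" using contour_eq by blast
  have "symp (dual_adj \<omega>)" by (rule sympI) (auto simp: dual_adj_def)
  moreover have "(dual_adj \<omega>)\<^sup>*\<^sup>* g f" using assms(1) C by simp
  ultimately have "(dual_adj \<omega>)\<^sup>*\<^sup>* f g" by (blast intro: sympD[OF symp_rtranclp])
  then show ?thesis using assms(2) C by (simp add: rtranclp_trans)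
qed

lemma phi_contour: "f \<in> C \<Longrightarrow> phi \<omega> f"
proof -
  obtain g where g: "phi \<omega> g" "C = {f. (dual_adj \<omega>)\<^sup>*\<^sup>* g f}" using contour_eq by blast
  show "f \<in> C \<Longrightarrow> phi \<omega> f"
    unfolding g(2) mem_Collect_eq by (induction rule: rtranclp_induct) (auto simp: g(1) dual_adj_def)
qed

lemma dual_edge_contour: "f \<in> C \<Longrightarrow> dual_edge f"
  using phi_contour by (simp add: phi_def)

lemma crossed_by_iff: "e \<in> X \<longleftrightarrow> (\<exists>f\<in>C. e \<in> crossed f)"
proof
  assume "e \<in> X"
  then obtain u v f where h: "e = {u, v}" "grid_adj u v" "f \<in> C" "gseg e \<inter> dseg f \<noteq> {}"
    unfolding crossed_by_def by blast
  obtain a b where "e = hedge a b \<or> e = vedge a b" using grid_adj_edge_cases[OF h(2)] h(1) by blast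
  then show "\<exists>f\<in>C. e \<in> crossed f"
  proof
    assume "e = hedge a b"
    then have "f = hcross a b" using hedge_meets_dual_edge_iff[OF dual_edge_contour[OF h(3)]] h(4) by simp
    then show ?thesis using h(3) \<open>e = hedge a b\<close> unfolding crossed_def by blast
  next
    assume "e = vedge a b"
    then have "f = vcross a b" using vedge_meets_dual_edge_iff[OF dual_edge_contour[OF h(3)]] h(4) by simp
    then show ?thesis using h(3) \<open>e = vedge a b\<close> unfolding crossed_def by blast
  qed
next
  assume "\<exists>f\<in>C. e \<in> crossed f"
  then obtain f where f: "f \<in> C" "e \<in> crossed f" by blast
  then consider a b where "e = hedge a b" "hcross a b = f" | a b where "e = vedge a b" "vcross a b = f"
    unfolding crossed_def by blast
  then show "e \<in> X"
  proof cases
    case 1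
    then have "gseg e \<inter> dseg f \<noteq> {}" using hedge_meets_dual_edge_iff[OF dual_edge_contour[OF f(1)]] by simp
    moreover have "e = {(a, b), (a + 1, b)}" "grid_adj (a, b) (a + 1, b)" using 1 by (auto simp: hedge_def grid_adj_def)
    ultimately show ?thesis unfolding crossed_by_def using f(1) by blast
  next
    case 2
    then have "gseg e \<inter> dseg f \<noteq> {}" using vedge_meets_dual_edge_iff[OF dual_edge_contour[OF f(1)]] by simp
    moreover have "e = {(a, b), (a, b + 1)}" "grid_adj (a, b) (a, b + 1)" using 2 by (auto simp: vedge_def grid_adj_def)
    ultimately show ?thesis unfolding crossed_by_def using f(1) by blast
  qed
qed

lemma crossed_disagree_iff: "s \<in> crossed f \<Longrightarrow> s = {u, v} \<Longrightarrow> \<omega> u \<noteq> \<omega> v \<longleftrightarrow> phi \<omega> f"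
  unfolding crossed_def using phi_hcross[OF in_Omega] phi_vcross[OF in_Omega]
  by (auto simp: hedge_def vedge_def doubleton_eq_iff)

lemma grid_edges: "e \<in> X \<Longrightarrow> \<exists>u v. e = {u, v} \<and> grid_adj u v"
  unfolding crossed_by_def by blast

lemma disagree: "{u, v} \<in> X \<Longrightarrow> \<omega> u \<noteq> \<omega> v"
  using crossed_by_iff crossed_disagree_iff phi_contour by blast

text \<open>A disagreeing side of a face met by \<open>X\<close> is crossed by a contour edge: on a black face both
  crossing dual edges are present once two sides disagree in different directions; on a white face
  the four crossing dual edges share the face's lower-right corner, so they are adjacent to the
  contour edge crossing \<open>e\<close>.\<close>

lemma face_complete:
  assumes e: "e \<in> X" "e \<in> face_sides m n" and s: "{u, v} \<in> face_sides m n" "\<omega> u \<noteq> \<omega> v"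
  shows "{u, v} \<in> X"
proof -
  obtain fe where fe: "fe \<in> C" "e \<in> crossed fe" using e crossed_by_iff by blast
  let ?D = "{hcross m n, hcross m (n + 1), vcross m n, vcross (m + 1) n}"
  have fe_D: "fe \<in> ?D" using face_sides_crossed[OF e(2)] crossed_unique fe(2) by blast
  obtain fs where fs: "fs \<in> ?D" "{u, v} \<in> crossed fs" using face_sides_crossed[OF s(1)] by blast
  have "phi \<omega> fs" using crossed_disagree_iff[OF fs(2)] s(2) by simp
  have "phi \<omega> fe" using phi_contour fe(1) by simp
  show ?thesis
  proof (cases "even (m + n)")
    case True
    show ?thesis
    proof (cases "fs = fe")
      case False
      then have "phi \<omega> (dual_hedge m n) \<and> phi \<omega> (dual_vedge (m + 1) (n - 1))"
        using fe_D fs(1) \<open>phi \<omega> fs\<close> \<open>phi \<omega> fe\<close> black_face_crossings[OF True] by auto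
      then have "hsplit \<omega> m n \<and> vsplit \<omega> m n" by (simp add: phi_dual_hedge phi_dual_vedge)
      then show ?thesis by (auto simp: hsplit_def vsplit_def)
    qed (use crossed_by_iff fe fs in blast)
  next
    case False
    then have "(m + 1, n) \<in> fe" "(m + 1, n) \<in> fs" using white_face_crossings fe_D fs(1) by auto
    then have "dual_adj \<omega> fe fs" using \<open>phi \<omega> fe\<close> \<open>phi \<omega> fs\<close> by (auto simp: dual_adj_def)
    then have "fs \<in> C" using contour_reachable fe(1) by blast
    then show ?thesis using crossed_by_iff fs by blast
  qed
qed

lemma face_connected:
  assumes "e \<in> X" "e' \<in> X"
  shows "(face_linked X)\<^sup>*\<^sup>* e e'"
proof -
  obtain f0 where f0: "f0 \<in> C" "e \<in> crossed f0" using assms(1) crossed_by_iff by blast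
  have linked: "face_linked X s s'" if f: "f \<in> C" "s \<in> crossed f" "s' \<in> crossed f" for f s s'
  proof -
    obtain m n where "crossed f \<subseteq> face_sides m n" using crossed_in_face[OF dual_edge_contour[OF f(1)]] by blast
    then show ?thesis using f crossed_by_iff unfolding face_linked_def by blast
  qed
  have reach: "\<forall>s\<in>crossed f. (face_linked X)\<^sup>*\<^sup>* e s" if "(dual_adj \<omega>)\<^sup>*\<^sup>* f0 f" for f
    using that
  proof (induction rule: rtranclp_induct)
    case base
    then show ?case using f0 linked by blast
  next
    case (step f f')
    have "f \<in> C" using contour_reachable f0(1) step(1) by blast
    then have "f' \<in> C" using contour_reachable step(2) by (meson r_into_rtranclp)
    obtain p where p: "p \<in> f" "p \<in> f'" using step(2) by (auto simp: dual_adj_def)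
    obtain s1 where s1: "s1 \<in> crossed f" "s1 \<in> face_sides (fst p - 1) (snd p)"
      using crossed_at_white_face[OF dual_edge_contour[OF \<open>f \<in> C\<close>] p(1)] by blast
    obtain s2 where s2: "s2 \<in> crossed f'" "s2 \<in> face_sides (fst p - 1) (snd p)"
      using crossed_at_white_face[OF dual_edge_contour[OF \<open>f' \<in> C\<close>] p(2)] by blast
    have "face_linked X s1 s2"
      using s1 s2 \<open>f \<in> C\<close> \<open>f' \<in> C\<close> crossed_by_iff unfolding face_linked_def by blast
    then have "(face_linked X)\<^sup>*\<^sup>* e s2" using step(3) s1(1) by (meson rtranclp.rtrancl_into_rtrancl)
    then show ?case using linked[OF \<open>f' \<in> C\<close> s2(1)] by (meson rtranclp.rtrancl_into_rtrancl)
  qed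
  obtain f where "f \<in> C" "e' \<in> crossed f" using assms(2) crossed_by_iff by blast
  with reach[OF contour_connected[OF f0(1) \<open>f \<in> C\<close>]] show ?thesis by blast
qed

lemma infinite_crossed_by:
  assumes "infinite C"
  shows "infinite X"
proof
  assume "finite X"
  define dual_of where "dual_of s = (SOME f. s \<in> crossed f)" for s
  have "C \<subseteq> dual_of ` X"
  proof
    fix f
    assume f: "f \<in> C"
    obtain p where "p \<in> f" using dual_edge_contour[OF f] by (auto simp: dual_edge_iff dual_hedge_def dual_vedge_def)
    then obtain s where s: "s \<in> crossed f" using crossed_at_white_face[OF dual_edge_contour[OF f]] by blast
    then have "dual_of s = f" unfolding dual_of_def using crossed_unique by (metis someI)
    then show "f \<in> dual_of ` X" using s f crossed_by_iff by blast
  qed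
  then show False using \<open>finite X\<close> assms finite_surj by blast
qed

lemma interface:
  assumes "infinite C" and "infinite {w. (avoiding_adj X)\<^sup>*\<^sup>* v w}"
  shows "interface \<omega> X v"
proof
  show "\<And>e. e \<in> X \<Longrightarrow> \<exists>u v. e = {u, v} \<and> grid_adj u v" by (rule grid_edges)
  show "\<And>u v. {u, v} \<in> X \<Longrightarrow> \<omega> u \<noteq> \<omega> v" by (rule disagree)
  show "\<And>e m n u v. e \<in> X \<Longrightarrow> e \<in> face_sides m n \<Longrightarrow> {u, v} \<in> face_sides m n \<Longrightarrow> \<omega> u \<noteq> \<omega> v
      \<Longrightarrow> {u, v} \<in> X"
    by (rule face_complete)
  show "\<And>e e'. e \<in> X \<Longrightarrow> e' \<in> X \<Longrightarrow> (face_linked X)\<^sup>*\<^sup>* e e'" by (rule face_connected)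
qed (use assms infinite_crossed_by in auto)

end

theorem lemma2p7:
  fixes \<omega> :: "int \<times> int \<Rightarrow> bool"
    and C :: "(int \<times> int) set set"
    and K :: "(int \<times> int) set"
  assumes "\<omega> \<in> Omega"
    and "is_contour \<omega> C" and "infinite C"
    and "is_GC_component C K" and "infinite K"
  shows "\<exists>Cl. is_cluster \<omega> Cl \<and> infinite Cl \<and> Cl \<subseteq> K \<and> incident Cl C"
proof -
  interpret contour \<omega> C using assms(1,2) by unfold_locales
  obtain v where K: "K = {w. (avoiding_adj (crossed_by C))\<^sup>*\<^sup>* v w}"
    using assms(4) unfolding is_GC_component_def GC_adj_eq_avoiding_adj by blast
  interpret interface \<omega> "crossed_by C" v using interface assms(3,5) K by simp
  have K_eq: "component = K" by (simp add: component_def K)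
  obtain x y where xy: "x \<in> K" "grid_adj x y" "{x, y} \<in> crossed_by C"
      "infinite {w. (same_adj \<omega>)\<^sup>*\<^sup>* x w}"
    using infinite_cluster_at_boundary unfolding K_eq by blast
  obtain f where "f \<in> C" "gseg {x, y} \<inter> dseg f \<noteq> {}" using xy(3) unfolding crossed_by_def by blast
  then have "incident {w. (same_adj \<omega>)\<^sup>*\<^sup>* x w} C"
    unfolding incident_def using infdist_crossed_endpoint[OF xy(2) dual_edge_contour] by blast
  moreover have "{w. (same_adj \<omega>)\<^sup>*\<^sup>* x w} \<subseteq> K"
    using cluster_subset_component xy(1) unfolding K_eq by blast
  ultimately show ?thesis using xy(4) unfolding is_cluster_def by blast
qed

end
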